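(* In the standing setup below, let $\mathcal F$ be a facet of $\mathcal S$ and $\delta,\epsilon>0$. Then there exists $N$ such that for every $i>N$ and every $y\in B_\delta\cap X_{\mathcal F,w_i}$, there is a unique point $z\in X^\circ_{\mathcal A,w_i}$ with $\pi_{\mathcal F}(z)=y$, and it satisfies $d(y,z)<\epsilon$.
   Context: Notation: $\mathcal A\subset\mathbb{R}^d$ finite, affinely spanning $\mathbb{R}^d$; $\Delta^{\mathcal A}=\{z\in\mathbb{R}^{\mathcal A}_{\ge0}\mid\sum z_{\mathbf a}=1\}$ with homogeneous coordinates and $\ell_1$ metric $d(y,z)=\sum_{\mathbf a}|y_{\mathbf a}-z_{\mathbf a}|$; $\Delta^{\mathcal F}$ the face where $z_{\mathbf a}=0$ for $\mathbf a\notin\mathcal F$. $\pi_{\mathcal F}$ maps $z$ with some $z_{\mathbf f}\neq0$, $\mathbf f\in\mathcal F$, to the point of $\Delta^{\mathcal F}$ obtained by setting coordinates outside $\mathcal F$ to $0$ and rescaling. For $w\in\mathbb{R}^{\mathcal A}_>$ and $\mathcal F\subset\mathcal A$, $X^\circ_{\mathcal F,w}=\{[w_{\mathbf f}x^{\mathbf f}\mid\mathbf f\in\mathcal F]\mid x\in\mathbb{R}^d_>\}\subset\Delta^{\mathcal F}$, $x^{\mathbf a}=\prod_j\exp(\mathbf a_j\log x_j)$, and $X_{\mathcal F,w}$ is its closure. $B_\delta=\{y\in\Delta^{\mathcal F}\mid y_{\mathbf f}\ge\delta\ \forall\mathbf f\in\mathcal F\}$. For $\lambda\in\mathbb{R}^{\mathcal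 A}$, $\mathcal S_\lambda$ is the regular subdivision whose faces are the sets $\{\mathbf a\mid(\mathbf a,\lambda(\mathbf a))\in F\}$, $F$ an upper face (outward normal with positive last coordinate) of $\mathrm{conv}\{(\mathbf a,\lambda(\mathbf a))\}$; facets are maximal faces (with $d$-dimensional convex hull). The secondary fan $\Sigma_{\mathcal A}$ consists of the closures of the sets $\{\lambda\mid\mathcal S_\lambda=\mathcal S\}$; $\mathcal S_\sigma$ is the subdivision of the cone $\sigma$. A sequence in a cone $\tau$ is $\sigma$-bounded if $\{\psi(v_i)\}$ is bounded for every linear $\psi$ vanishing on the face $\sigma$. Standing setup: $\{w_i\}\subset\mathbb{R}^{\mathcal A}_>$, $v_i=\mathrm{Log}(w_i)$; there is a cone $\tau\in\Sigma_{\mathcal A}$ containing all $v_i$ with only finitely many $v_i$ in any proper face of $\tau$; a face $\sigma$ of $\tau$ is the minimum face of boundedness (smallest face for which the sequence is bounded) of every subsequence of $\{v_i\}$; $v_i=u_i+\bar v_i$ with $u_i\in\sigma$, $\bar v_i\to v$; $w=\mathrm{Exp}(v)$; $\mathcal S=\mathcal S_\sigma$. *)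

theory Defs
  imports "HOL-Analysis.Analysis"
begin

text \<open>The finite point configuration \<open>\<A> \<subseteq> \<real>^d\<close> is given as an injective
  map \<open>pts :: 'a \<Rightarrow> real^'d\<close> from a finite index type \<open>'a\<close>; thus \<open>\<real>^\<A>\<close> is \<open>real^'a\<close>
  and subsets \<open>\<F> \<subseteq> \<A>\<close> are sets of indices \<open>'a set\<close>.\<close>

definition simplex_face :: "'a::finite set \<Rightarrow> (real^'a) set" where
  "simplex_face F = {z. (\<forall>a. 0 \<le> z$a) \<and> (\<Sum>a\<in>UNIV. z$a) = 1 \<and> (\<forall>a. a \<notin> F \<longrightarrow> z$a = 0)}"

definition l1dist :: "real^'a::finite \<Rightarrow> real^'a \<Rightarrow> real" where
  "l1dist y z = (\<Sum>a\<in>UNIV. \<bar>y$a - z$a\<bar>)"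

definition proj_face :: "'a::finite set \<Rightarrow> real^'a \<Rightarrow> real^'a" where
  "proj_face F z = (\<chi> a. if a \<in> F then z$a / (\<Sum>f\<in>F. z$f) else 0)"

definition monom :: "('a \<Rightarrow> real^'d::finite) \<Rightarrow> real^'d \<Rightarrow> 'a \<Rightarrow> real" where
  "monom pts x a = (\<Prod>j\<in>UNIV. exp ((pts a)$j * ln (x$j)))"

definition Xo :: "('a::finite \<Rightarrow> real^'d::finite) \<Rightarrow> 'a set \<Rightarrow> real^'a \<Rightarrow> (real^'a) set" where
  "Xo pts F w = {(\<chi> a. if a \<in> F then w$a * monom pts x a / (\<Sum>f\<in>F. w$f * monom pts x f) else 0)
                 | x. \<forall>j. 0 < x$j}"

definition Xcl :: "('a::finite \<Rightarrow> real^'d::finite) \<Rightarrow> 'a set \<Rightarrow> real^'a \<Rightarrow> (real^'a) set" where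
  "Xcl pts F w = closure (Xo pts F w)"

definition Bdelta :: "'a::finite set \<Rightarrow> real \<Rightarrow> (real^'a) set" where
  "Bdelta F \<delta> = {y \<in> simplex_face F. \<forall>f\<in>F. \<delta> \<le> y$f}"

text \<open>Upper faces of the lifted polytope \<open>conv{(a,\<lambda>(a))}\<close>: the faces having an outward
  normal with positive last coordinate (faces of polytopes are exposed, so a face with
  outward normal n is the set of maximisers of n).\<close>
definition lifted_polytope :: "('a::finite \<Rightarrow> real^'d::finite) \<Rightarrow> real^'a \<Rightarrow> ((real^'d) \<times> real) set" where
  "lifted_polytope pts lam = convex hull ((\<lambda>a. (pts a, lam$a)) ` UNIV)"

definition upper_faces :: "('a::finite \<Rightarrow> real^'d::finite) \<Rightarrow> real^'a \<Rightarrow> ((real^'d) \<times> real) set set" where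
  "upper_faces pts lam =
     {{p \<in> lifted_polytope pts lam. \<forall>q \<in> lifted_polytope pts lam. inner q n \<le> inner p n}
      | n. 0 < snd n}"

definition reg_subdiv :: "('a::finite \<Rightarrow> real^'d::finite) \<Rightarrow> real^'a \<Rightarrow> 'a set set" where
  "reg_subdiv pts lam = {{a. (pts a, lam$a) \<in> G} | G. G \<in> upper_faces pts lam}"

definition is_facet :: "('a::finite \<Rightarrow> real^'d::finite) \<Rightarrow> 'a set set \<Rightarrow> 'a set \<Rightarrow> bool" where
  "is_facet pts S F \<longleftrightarrow> F \<in> S \<and> (\<forall>G\<in>S. F \<subseteq> G \<longrightarrow> G = F)
      \<and> aff_dim (convex hull (pts ` F)) = int CARD('d)"

definition secondary_fan :: "('a::finite \<Rightarrow> real^'d::finite) \<Rightarrow> (real^'a) set set" where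
  "secondary_fan pts = {closure {mu. reg_subdiv pts mu = reg_subdiv pts lam} | lam. True}"

definition cone_subdiv :: "('a::finite \<Rightarrow> real^'d::finite) \<Rightarrow> (real^'a) set \<Rightarrow> 'a set set" where
  "cone_subdiv pts \<sigma> = (THE S. closure {mu. reg_subdiv pts mu = S} = \<sigma>)"

definition cone_face :: "(real^'a::finite) set \<Rightarrow> (real^'a) set \<Rightarrow> bool" where
  "cone_face \<sigma> \<tau> \<longleftrightarrow> \<sigma> face_of \<tau> \<and> \<sigma> \<noteq> {}"

definition face_bounded :: "(real^'a::finite) set \<Rightarrow> (nat \<Rightarrow> real^'a) \<Rightarrow> bool" where
  "face_bounded \<sigma> s \<longleftrightarrow>
     (\<forall>\<psi> :: real^'a \<Rightarrow> real. linear \<psi> \<and> (\<forall>x\<in>\<sigma>. \<psi> x = 0) \<longrightarrow> bounded (range (\<lambda>i. \<psi> (s i))))"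

definition min_face_bdd :: "(real^'a::finite) set \<Rightarrow> (real^'a) set \<Rightarrow> (nat \<Rightarrow> real^'a) \<Rightarrow> bool" where
  "min_face_bdd \<tau> \<sigma> s \<longleftrightarrow> cone_face \<sigma> \<tau> \<and> face_bounded \<sigma> s \<and>
     (\<forall>\<sigma>'. cone_face \<sigma>' \<tau> \<and> face_bounded \<sigma>' s \<longrightarrow> \<sigma> \<subseteq> \<sigma>')"

end

theory Submission
  imports Defs
begin

text \<open>A facet \<open>F\<close> of \<open>\<S>_\<sigma>\<close> is the contact set of an affine majorant of a height \<open>lam \<in> \<sigma>\<close>,
  and \<open>\<sigma>\<close> is the closed secondary cone of \<open>\<S>_lam\<close>. For \<open>a \<notin> F\<close> let \<open>U\<close> be affine coordinates
  of \<open>a\<close> over \<open>F\<close>; the defect \<open>x\<^sub>a - \<Sum>\<^sub>f U\<^sub>f x\<^sub>f\<close> is nonpositive on \<open>\<sigma>\<close> and negative at \<open>lam\<close>.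
  Along \<open>v\<^sub>i\<close> it tends to \<open>-\<infinity>\<close>, since otherwise some subsequence would be bounded relative to
  the smaller face of \<open>\<sigma>\<close> on which the defect vanishes. For a point \<open>z\<close> of \<open>X\<^sub>\<A>\<^sub>,\<^sub>w\<^sub>i\<close> over
  \<open>y \<in> B\<^sub>\<delta>\<close>, the ratio \<open>z\<^sub>a / \<Sum>\<^sub>F z\<close> is the exponential of this defect at \<open>v\<^sub>i\<close> plus a
  combination of the \<open>ln y\<^sub>f \<in> [ln \<delta>, 0]\<close>, so the coordinates of \<open>z\<close> off \<open>F\<close> become uniformly
  small and \<open>z\<close> is close to \<open>y\<close>. Such a \<open>z\<close> exists because points of the closure of the torus
  orbit with positive \<open>F\<close>-coordinates lie on the orbit, and it is unique because \<open>F\<close> spans.\<close>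

section \<open>Cells of regular subdivisions as contact sets\<close>

definition affine_majorant :: "('a::finite \<Rightarrow> real^'d::finite) \<Rightarrow> real^'a \<Rightarrow> real^'d \<Rightarrow> real \<Rightarrow> bool" where
  "affine_majorant pts lam c b \<longleftrightarrow> (\<forall>a. lam$a \<le> c \<bullet> pts a + b)"

definition contact_set :: "('a::finite \<Rightarrow> real^'d::finite) \<Rightarrow> real^'a \<Rightarrow> real^'d \<Rightarrow> real \<Rightarrow> 'a set" where
  "contact_set pts lam c b = {a. lam$a = c \<bullet> pts a + b}"

lemma convex_hull_inner_le:
  fixes n :: "'b::real_inner"
  assumes "\<And>x. x \<in> S \<Longrightarrow> n \<bullet> x \<le> K" and "q \<in> convex hull S"
  shows "n \<bullet> q \<le> K"
proof -
  have "convex hull S \<subseteq> {x. n \<bullet> x \<le> K}"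
    by (rule hull_minimal) (use assms(1) convex_halfspace_le in auto)
  then show ?thesis using assms(2) by auto
qed

text \<open>An upper face with outward normal \<open>(n\<^sub>1, t)\<close>, \<open>t > 0\<close>, is the contact set of the affine
  majorant \<open>x \<mapsto> -(n\<^sub>1/t) \<bullet> x + m/t\<close>, where \<open>m\<close> is the maximum of the normal on the lifted points.\<close>
lemma reg_subdivE:
  fixes pts :: "'a::finite \<Rightarrow> real^'d::finite"
  assumes "E \<in> reg_subdiv pts lam"
  obtains c b where "affine_majorant pts lam c b" "E = contact_set pts lam c b" "E \<noteq> {}"
proof -
  obtain n where n: "0 < snd n" and
    E: "E = {a. (pts a, lam$a) \<in> {p \<in> lifted_polytope pts lam. \<forall>q \<in> lifted_polytope pts lam. inner q n \<le> inner p n}}"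
    using assms unfolding reg_subdiv_def upper_faces_def by blast
  define P where "P = lifted_polytope pts lam"
  define lift where "lift = (\<lambda>a. (pts a, lam$a))"
  obtain n1 t where nt: "n = (n1, t)" by (cases n)
  have t: "0 < t" using n nt by simp
  define m where "m = Max (range (\<lambda>a. n \<bullet> lift a))"
  have le_m: "n \<bullet> lift a \<le> m" for a unfolding m_def by (rule Max_ge) auto
  have "m \<in> range (\<lambda>a. n \<bullet> lift a)" unfolding m_def by (rule Max_in) auto
  then obtain a0 where a0: "n \<bullet> lift a0 = m" by auto
  have P: "P = convex hull (range lift)" by (simp add: P_def lifted_polytope_def lift_def)
  have liftP: "lift a \<in> P" for a unfolding P by (rule hull_inc) simp
  have Pm: "n \<bullet> q \<le> m" if "q \<in> P" for q
    using that unfolding P by (rule convex_hull_inner_le[rotated]) (use le_m in auto)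
  have memE: "a \<in> E \<longleftrightarrow> n \<bullet> lift a = m" for a
  proof -
    have "a \<in> E \<longleftrightarrow> (\<forall>q\<in>P. n \<bullet> q \<le> n \<bullet> lift a)"
      using liftP unfolding E P_def lift_def by (auto simp: inner_commute)
    also have "\<dots> \<longleftrightarrow> n \<bullet> lift a = m"
      using Pm le_m[of a] a0 liftP[of a0] by (metis order.antisym order.refl)
    finally show ?thesis .
  qed
  define c where "c = -(1/t) *\<^sub>R n1"
  define b where "b = m / t"
  have key: "n \<bullet> lift a - m = t * (lam$a - (c \<bullet> pts a + b))" for a
    using t by (simp add: nt lift_def c_def b_def field_simps inner_commute)
  have "affine_majorant pts lam c b" unfolding affine_majorant_def
  proof
    fix a have "t * (lam$a - (c \<bullet> pts a + b)) \<le> 0" using le_m[of a] key[of a] by simp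
    then show "lam$a \<le> c \<bullet> pts a + b" using t by (simp add: mult_le_0_iff)
  qed
  moreover have "E = contact_set pts lam c b" unfolding contact_set_def
  proof (intro set_eqI)
    fix a
    have "a \<in> E \<longleftrightarrow> t * (lam$a - (c \<bullet> pts a + b)) = 0"
      using memE[of a] key[of a] by (metis eq_iff_diff_eq_0)
    then show "a \<in> E \<longleftrightarrow> a \<in> {a. lam$a = c \<bullet> pts a + b}" using t by simp
  qed
  moreover have "a0 \<in> E" using memE a0 by auto
  ultimately show ?thesis using that by blast
qed

lemma contact_set_in_reg_subdiv:
  fixes pts :: "'a::finite \<Rightarrow> real^'d::finite"
  assumes maj: "affine_majorant pts lam c b" and ne: "contact_set pts lam c b \<noteq> {}"
  shows "contact_set pts lam c b \<in> reg_subdiv pts lam"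
proof -
  define n where "n = (- c, 1::real)"
  define P where "P = lifted_polytope pts lam"
  define lift where "lift = (\<lambda>a. (pts a, lam$a))"
  have key: "n \<bullet> lift a = lam$a - c \<bullet> pts a" for a by (simp add: n_def lift_def)
  have le_b: "n \<bullet> lift a \<le> b" for a using maj key unfolding affine_majorant_def by (smt (verit))
  have P: "P = convex hull (range lift)" by (simp add: P_def lifted_polytope_def lift_def)
  have liftP: "lift a \<in> P" for a unfolding P by (rule hull_inc) simp
  have Pb: "n \<bullet> q \<le> b" if "q \<in> P" for q
    using that unfolding P by (rule convex_hull_inner_le[rotated]) (use le_b in auto)
  obtain a0 where "a0 \<in> contact_set pts lam c b" using ne by blast
  then have a0: "n \<bullet> lift a0 = b" using key unfolding contact_set_def by simp
  have "contact_set pts lam c b = {a. lift a \<in> {p \<in> P. \<forall>q \<in> P. inner q n \<le> inner p n}}"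
  proof (intro set_eqI iffI)
    fix a assume "a \<in> contact_set pts lam c b"
    then have "n \<bullet> lift a = b" using key unfolding contact_set_def by auto
    then show "a \<in> {a. lift a \<in> {p \<in> P. \<forall>q \<in> P. inner q n \<le> inner p n}}"
      using Pb liftP by (auto simp: inner_commute)
  next
    fix a assume "a \<in> {a. lift a \<in> {p \<in> P. \<forall>q \<in> P. inner q n \<le> inner p n}}"
    then have "n \<bullet> lift a0 \<le> n \<bullet> lift a" using liftP by (auto simp: inner_commute)
    then have "n \<bullet> lift a = b" using a0 le_b[of a] by auto
    then show "a \<in> contact_set pts lam c b" using key unfolding contact_set_def by auto
  qed
  moreover have "0 < snd n" by (simp add: n_def)
  ultimately show ?thesis
    unfolding reg_subdiv_def upper_faces_def P_def lift_def by blast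
qed

definition affinely_spanning :: "('a \<Rightarrow> real^'d::finite) \<Rightarrow> 'a set \<Rightarrow> bool" where
  "affinely_spanning pts F \<longleftrightarrow> affine hull (pts ` F) = UNIV"

definition full_cell :: "('a::finite \<Rightarrow> real^'d::finite) \<Rightarrow> real^'a \<Rightarrow> 'a set \<Rightarrow> bool" where
  "full_cell pts lam F \<longleftrightarrow>
     (\<exists>c b. affine_majorant pts lam c b \<and> F = contact_set pts lam c b \<and> affinely_spanning pts F)"

lemma full_cellE:
  assumes "full_cell pts lam F"
  obtains c b where "affine_majorant pts lam c b" "F = contact_set pts lam c b" "affinely_spanning pts F"
  using assms unfolding full_cell_def by blast

lemma affinely_spanning_nonempty: "affinely_spanning pts F \<Longrightarrow> F \<noteq> {}"
  unfolding affinely_spanning_def by auto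

lemma affinely_spanning_mono: "affinely_spanning pts F \<Longrightarrow> F \<subseteq> G \<Longrightarrow> affinely_spanning pts G"
  unfolding affinely_spanning_def by (metis UNIV_I hull_mono image_mono subsetI subset_antisym)

lemma aff_dim_convex_hull_eq_DIM_iff:
  fixes pts :: "'a \<Rightarrow> real^'d::finite"
  assumes "finite F"
  shows "aff_dim (convex hull (pts ` F)) = int CARD('d) \<longleftrightarrow> affinely_spanning pts F"
  unfolding affinely_spanning_def aff_dim_convex_hull
  using aff_dim_eq_full[of "pts ` F"] by simp

lemma affinely_spanning_affine_coordinates:
  fixes pts :: "'a::finite \<Rightarrow> real^'d::finite"
  assumes "inj pts" "affinely_spanning pts F"
  obtains U where "\<And>x. sum (U x) F = 1" "\<And>x. (\<Sum>f\<in>F. U x f *\<^sub>R pts f) = x"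
proof -
  have ex: "\<exists>u. sum u F = 1 \<and> (\<Sum>f\<in>F. u f *\<^sub>R pts f) = x" for x
  proof -
    have "x \<in> affine hull (pts ` F)" using assms(2) by (simp add: affinely_spanning_def)
    then obtain v where v: "sum v (pts ` F) = 1" "(\<Sum>y\<in>pts ` F. v y *\<^sub>R y) = x"
      by (auto simp: affine_hull_finite)
    have "inj_on pts F" using assms(1) by (simp add: inj_on_def inj_def)
    with v show ?thesis by (intro exI[of _ "v \<circ> pts"]) (simp add: sum.reindex)
  qed
  define U where "U x = (SOME u. sum u F = 1 \<and> (\<Sum>f\<in>F. u f *\<^sub>R pts f) = x)" for x
  have "sum (U x) F = 1 \<and> (\<Sum>f\<in>F. U x f *\<^sub>R pts f) = x" for x
    unfolding U_def by (rule someI_ex[OF ex])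
  then show ?thesis using that by blast
qed

lemma inner_affine_combination:
  fixes pts :: "'a \<Rightarrow> real^'d::finite"
  assumes "sum u F = 1"
  shows "c \<bullet> (\<Sum>f\<in>F. u f *\<^sub>R pts f) + b = (\<Sum>f\<in>F. u f * (c \<bullet> pts f + b))"
proof -
  have "(\<Sum>f\<in>F. u f * (c \<bullet> pts f + b)) = (\<Sum>f\<in>F. u f * (c \<bullet> pts f)) + (\<Sum>f\<in>F. u f) * b"
    by (simp add: distrib_left sum.distrib sum_distrib_right)
  then show ?thesis using assms by (simp add: inner_sum_right)
qed

lemma affine_eq_if_eq_on_spanning:
  fixes pts :: "'a::finite \<Rightarrow> real^'d::finite"
  assumes "inj pts" "affinely_spanning pts F" "\<And>f. f \<in> F \<Longrightarrow> c \<bullet> pts f + b = c' \<bullet> pts f + b'"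
  shows "c \<bullet> x + b = c' \<bullet> x + b'"
proof -
  obtain U where U: "\<And>x. sum (U x) F = 1" "\<And>x. (\<Sum>f\<in>F. U x f *\<^sub>R pts f) = x"
    using affinely_spanning_affine_coordinates[OF assms(1,2)] by blast
  define u where "u = U x"
  have u: "sum u F = 1" "(\<Sum>f\<in>F. u f *\<^sub>R pts f) = x" using U unfolding u_def by auto
  have "c \<bullet> x + b = (\<Sum>f\<in>F. u f * (c \<bullet> pts f + b))"
    using inner_affine_combination[OF u(1)] u(2) by metis
  also have "\<dots> = (\<Sum>f\<in>F. u f * (c' \<bullet> pts f + b'))" using assms(3) by simp
  also have "\<dots> = c' \<bullet> x + b'" using inner_affine_combination[OF u(1)] u(2) by metis
  finally show ?thesis .
qed

lemma is_facet_reg_subdiv_iff: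
  fixes pts :: "'a::finite \<Rightarrow> real^'d::finite"
  assumes "inj pts"
  shows "is_facet pts (reg_subdiv pts lam) F \<longleftrightarrow> full_cell pts lam F"
proof
  assume facet: "is_facet pts (reg_subdiv pts lam) F"
  then obtain c b where "affine_majorant pts lam c b" "F = contact_set pts lam c b"
    unfolding is_facet_def by (blast elim: reg_subdivE)
  moreover have "affinely_spanning pts F"
    using facet unfolding is_facet_def aff_dim_convex_hull_eq_DIM_iff[OF finite] by blast
  ultimately show "full_cell pts lam F" unfolding full_cell_def by blast
next
  assume "full_cell pts lam F"
  then obtain c b where maj: "affine_majorant pts lam c b" and F: "F = contact_set pts lam c b"
    and sp: "affinely_spanning pts F"
    by (rule full_cellE)
  have "F \<in> reg_subdiv pts lam"
    using contact_set_in_reg_subdiv[OF maj] F affinely_spanning_nonempty[OF sp] by simp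
  moreover have "G = F" if cell: "G \<in> reg_subdiv pts lam" and sub: "F \<subseteq> G" for G
  proof -
    obtain c' b' where G: "G = contact_set pts lam c' b'" using cell by (rule reg_subdivE) blast
    have "c' \<bullet> x + b' = c \<bullet> x + b" for x
      by (rule affine_eq_if_eq_on_spanning[OF assms sp]) (use sub F G in \<open>auto simp: contact_set_def\<close>)
    then show "G = F" using F G by (simp add: contact_set_def)
  qed
  ultimately show "is_facet pts (reg_subdiv pts lam) F"
    unfolding is_facet_def aff_dim_convex_hull_eq_DIM_iff[OF finite] using sp by blast
qed

lemma is_facet_affinely_spanning:
  fixes pts :: "'a::finite \<Rightarrow> real^'d::finite"
  shows "is_facet pts S F \<Longrightarrow> affinely_spanning pts F"
  unfolding is_facet_def aff_dim_convex_hull_eq_DIM_iff[OF finite] by blast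

definition barycenter :: "('a \<Rightarrow> 'b::real_vector) \<Rightarrow> 'a set \<Rightarrow> 'b" where
  "barycenter p G = (1 / real (card G)) *\<^sub>R (\<Sum>g\<in>G. p g)"

lemma barycenter_in_convex_hull:
  assumes "finite G" "G \<noteq> {}"
  shows "barycenter p G \<in> convex hull (p ` G)"
proof -
  have "barycenter p G = (\<Sum>g\<in>G. (1 / real (card G)) *\<^sub>R p g)"
    by (simp add: barycenter_def scaleR_sum_right)
  also have "\<dots> \<in> convex hull (p ` G)"
    by (rule convex_sum) (use assms in \<open>auto intro: hull_inc\<close>)
  finally show ?thesis .
qed

lemma inner_barycenter:
  fixes pts :: "'a \<Rightarrow> real^'d::finite"
  assumes "finite G" "G \<noteq> {}"
  shows "c \<bullet> barycenter pts G + b = (\<Sum>g\<in>G. c \<bullet> pts g + b) / real (card G)"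
proof -
  have "sum (\<lambda>g. 1 / real (card G)) G = 1" using assms by simp
  then have "c \<bullet> barycenter pts G + b = (\<Sum>g\<in>G. (1 / real (card G)) * (c \<bullet> pts g + b))"
    unfolding barycenter_def scaleR_sum_right by (rule inner_affine_combination)
  then show ?thesis by (simp add: sum_divide_distrib)
qed

text \<open>On \<open>conv F\<close> the majorant of \<open>F\<close> lies below that of \<open>G\<close>; at the barycentre of \<open>G\<close> this
  forces equality on all of \<open>G\<close>.\<close>
lemma contact_set_subset_if_barycenter_in_hull:
  fixes pts :: "'a::finite \<Rightarrow> real^'d::finite"
  assumes maj: "affine_majorant pts lam c b" and maj': "affine_majorant pts lam c' b'"
    and G: "G \<subseteq> contact_set pts lam c' b'" "G \<noteq> {}"
    and bary: "barycenter pts G \<in> convex hull (pts ` F)" and F: "F \<subseteq> contact_set pts lam c b"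
  shows "G \<subseteq> contact_set pts lam c b"
proof -
  have "c \<bullet> barycenter pts G + b \<le> c' \<bullet> barycenter pts G + b'"
  proof -
    have "(c - c') \<bullet> barycenter pts G \<le> b' - b"
    proof (rule convex_hull_inner_le[OF _ bary])
      fix q assume "q \<in> pts ` F"
      then obtain f where "f \<in> F" "q = pts f" by auto
      then show "(c - c') \<bullet> q \<le> b' - b"
        using F maj' by (auto simp: contact_set_def affine_majorant_def inner_diff_left
            dest!: spec[of _ f] subsetD[of F])
    qed
    then show ?thesis by (simp add: inner_diff_left)
  qed
  also have "c' \<bullet> barycenter pts G + b' = (\<Sum>g\<in>G. lam$g) / real (card G)"
    using G by (auto simp: inner_barycenter contact_set_def intro!: arg_cong[of _ _ "\<lambda>s. s / _"] sum.cong)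
  finally have "(\<Sum>g\<in>G. c \<bullet> pts g + b) \<le> (\<Sum>g\<in>G. lam$g)"
    using G(2) by (simp add: inner_barycenter divide_le_cancel card_gt_0_iff)
  moreover have le: "lam$g \<le> c \<bullet> pts g + b" for g
    using maj by (simp add: affine_majorant_def)
  ultimately have "\<not> (\<exists>g\<in>G. lam$g < c \<bullet> pts g + b)"
    using sum_strict_mono_ex1[of G "\<lambda>g. lam$g" "\<lambda>g. c \<bullet> pts g + b"] by auto
  then show ?thesis using le by (force simp: contact_set_def order.strict_iff_order)
qed

lemma exists_uniform_margin:
  fixes g h :: "'b \<Rightarrow> real"
  assumes "finite A" "\<And>a. a \<in> A \<Longrightarrow> 0 < g a"
  obtains \<delta> where "\<delta> > 0" "\<And>a. a \<in> A \<Longrightarrow> \<delta> * \<bar>h a\<bar> < g a"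
proof -
  define \<delta> where "\<delta> = Min (insert 1 ((\<lambda>a. g a / (\<bar>h a\<bar> + 1)) ` A))"
  have pos: "0 < \<delta>" unfolding \<delta>_def using assms by (subst Min_gr_iff) auto
  have "\<delta> * \<bar>h a\<bar> < g a" if "a \<in> A" for a
  proof -
    have le: "\<delta> \<le> g a / (\<bar>h a\<bar> + 1)" unfolding \<delta>_def using assms(1) that by (intro Min_le) auto
    have "\<delta> * \<bar>h a\<bar> \<le> g a / (\<bar>h a\<bar> + 1) * \<bar>h a\<bar>" by (rule mult_right_mono[OF le]) simp
    also have "\<dots> < g a" using assms(2)[OF that] by (simp add: field_simps)
    finally show ?thesis .
  qed
  with pos show ?thesis using that by blast
qed

lemma bounded_majorants_below:
  fixes pts :: "'a::finite \<Rightarrow> real^'d::finite"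
  assumes x: "x \<in> interior (convex hull (range pts))"
  shows "bounded {p. affine_majorant pts lam (fst p) (snd p) \<and> fst p \<bullet> x + snd p \<le> M}"
proof -
  obtain e where e: "e > 0" "cball x e \<subseteq> convex hull (range pts)"
    using x mem_interior_cball by blast
  define m where "m = Min (range (\<lambda>a. lam$a))"
  have low: "m \<le> c \<bullet> y + b" if "affine_majorant pts lam c b" "y \<in> convex hull (range pts)" for c b y
  proof -
    have "(-c) \<bullet> y \<le> b - m"
    proof (rule convex_hull_inner_le[OF _ that(2)])
      fix q assume "q \<in> range pts"
      then obtain a where "q = pts a" by auto
      moreover have "m \<le> lam$a" unfolding m_def by (rule Min_le) auto
      moreover have "lam$a \<le> c \<bullet> pts a + b" using that(1) by (simp add: affine_majorant_def)
      ultimately show "(-c) \<bullet> q \<le> b - m" by simp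
    qed
    then show ?thesis by simp
  qed
  define R1 where "R1 = (M - m) / e"
  define R2 where "R2 = \<bar>M\<bar> + \<bar>m\<bar> + R1 * norm x"
  have bounds: "norm c \<le> R1 \<and> \<bar>b\<bar> \<le> R2" if maj: "affine_majorant pts lam c b" and le: "c \<bullet> x + b \<le> M" for c b
  proof -
    text \<open>Evaluate the majorant at the point of \<open>cball x e\<close> in direction \<open>-c\<close>.\<close>
    define y where "y = x - (e / norm c) *\<^sub>R c"
    have "y \<in> cball x e" using e by (simp add: y_def dist_norm)
    then have "m \<le> c \<bullet> y + b" using low maj e(2) by blast
    moreover have "c \<bullet> y = c \<bullet> x - e * norm c"
      by (cases "c = 0") (simp_all add: y_def inner_diff_right power2_norm_eq_inner[symmetric] power2_eq_square)
    ultimately have "e * norm c \<le> M - m" using le by simp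
    then have nc: "norm c \<le> R1" unfolding R1_def using e by (simp add: field_simps)
    have "\<bar>c \<bullet> x\<bar> \<le> R1 * norm x"
      using Cauchy_Schwarz_ineq2[of c x] mult_right_mono[OF nc norm_ge_zero[of x]] by linarith
    moreover have "m \<le> c \<bullet> x + b"
      using low[OF maj] e by (meson centre_in_cball less_imp_le subsetD)
    ultimately show ?thesis using nc le unfolding R2_def by linarith
  qed
  have "{p. affine_majorant pts lam (fst p) (snd p) \<and> fst p \<bullet> x + snd p \<le> M} \<subseteq> cball 0 R1 \<times> cball 0 R2"
    using bounds by (auto simp: mem_cball_0)
  then show ?thesis using bounded_Times[OF bounded_cball bounded_cball] bounded_subset by blast
qed

lemma exists_minimal_majorant:
  fixes pts :: "'a::finite \<Rightarrow> real^'d::finite"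
  assumes x: "x \<in> interior (convex hull (range pts))"
  obtains c b where "affine_majorant pts lam c b"
    "\<And>c' b'. affine_majorant pts lam c' b' \<Longrightarrow> c \<bullet> x + b \<le> c' \<bullet> x + b'"
proof -
  define M where "M = Max (range (\<lambda>a. lam$a))"
  define K where "K = {p. affine_majorant pts lam (fst p) (snd p) \<and> fst p \<bullet> x + snd p \<le> M}"
  have K0: "(0, M) \<in> K" unfolding K_def affine_majorant_def M_def by simp
  have "K = (\<Inter>a. {p. lam$a \<le> fst p \<bullet> pts a + snd p}) \<inter> {p. fst p \<bullet> x + snd p \<le> M}"
    unfolding K_def affine_majorant_def by auto
  then have "closed K"
    by (auto intro!: closed_Int closed_INT closed_Collect_le continuous_intros)
  then have "compact K"
    using bounded_majorants_below[OF x] unfolding K_def by (simp add: compact_eq_bounded_closed)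
  moreover have "continuous_on K (\<lambda>p. fst p \<bullet> x + snd p)" by (auto intro!: continuous_intros)
  ultimately obtain p where pK: "p \<in> K" and pmin: "\<And>q. q \<in> K \<Longrightarrow> fst p \<bullet> x + snd p \<le> fst q \<bullet> x + snd q"
    using continuous_attains_inf[of K] K0 by blast
  show ?thesis
  proof (rule that[of "fst p" "snd p"])
    show "affine_majorant pts lam (fst p) (snd p)" using pK unfolding K_def by simp
    fix c' b' assume "affine_majorant pts lam c' b'"
    then show "fst p \<bullet> x + snd p \<le> c' \<bullet> x + b'"
      using pmin[of "(c', b')"] pK unfolding K_def by force
  qed
qed

lemma affine_majorant_refine:
  fixes pts :: "'a::finite \<Rightarrow> real^'d::finite"
  assumes maj: "affine_majorant pts lam c b"
    and nonneg: "\<And>a. a \<in> contact_set pts lam c b \<Longrightarrow> 0 \<le> d \<bullet> pts a + e"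
  obtains \<delta> where "\<delta> > 0" "affine_majorant pts lam (c + \<delta> *\<^sub>R d) (b + \<delta> * e)"
    "contact_set pts lam (c + \<delta> *\<^sub>R d) (b + \<delta> * e) = {a \<in> contact_set pts lam c b. d \<bullet> pts a + e = 0}"
proof -
  define F where "F = contact_set pts lam c b"
  have gap: "0 < c \<bullet> pts a + b - lam$a" if "a \<in> - F" for a
    using that maj unfolding F_def contact_set_def affine_majorant_def by (simp add: order_less_le)
  obtain \<delta> where \<delta>: "\<delta> > 0" "\<And>a. a \<in> -F \<Longrightarrow> \<delta> * \<bar>d \<bullet> pts a + e\<bar> < c \<bullet> pts a + b - lam$a"
    using exists_uniform_margin[of "-F" "\<lambda>a. c \<bullet> pts a + b - lam$a" "\<lambda>a. d \<bullet> pts a + e"] gap by auto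
  have val: "(c + \<delta> *\<^sub>R d) \<bullet> pts a + (b + \<delta> * e) = c \<bullet> pts a + b + \<delta> * (d \<bullet> pts a + e)" for a
    by (simp add: inner_add_left algebra_simps)
  have off: "lam$a < (c + \<delta> *\<^sub>R d) \<bullet> pts a + (b + \<delta> * e)" if "a \<notin> F" for a
  proof -
    have "\<delta> * (- \<bar>d \<bullet> pts a + e\<bar>) \<le> \<delta> * (d \<bullet> pts a + e)" by (rule mult_left_mono) (use \<delta>(1) in auto)
    then show ?thesis using \<delta>(2)[of a] that val[of a] by simp
  qed
  have on: "lam$a = c \<bullet> pts a + b" "0 \<le> \<delta> * (d \<bullet> pts a + e)" if "a \<in> F" for a
    using that nonneg \<delta>(1) unfolding F_def contact_set_def by auto
  show ?thesis
  proof (rule that[OF \<delta>(1)])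
    show "affine_majorant pts lam (c + \<delta> *\<^sub>R d) (b + \<delta> * e)" unfolding affine_majorant_def
    proof
      fix a show "lam$a \<le> (c + \<delta> *\<^sub>R d) \<bullet> pts a + (b + \<delta> * e)"
        using on[of a] off[of a] val[of a] by (cases "a \<in> F") auto
    qed
    show "contact_set pts lam (c + \<delta> *\<^sub>R d) (b + \<delta> * e) = {a \<in> contact_set pts lam c b. d \<bullet> pts a + e = 0}"
    proof (intro set_eqI)
      fix a
      show "a \<in> contact_set pts lam (c + \<delta> *\<^sub>R d) (b + \<delta> * e) \<longleftrightarrow> a \<in> {a \<in> contact_set pts lam c b. d \<bullet> pts a + e = 0}"
        using on[of a] off[of a] val[of a] \<delta>(1) by (cases "a \<in> F") (auto simp: F_def contact_set_def)
    qed
  qed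
qed

text \<open>Otherwise a hyperplane separates \<open>x\<close> from the contact points, and tilting the majorant
  along it keeps it a majorant while lowering its value at \<open>x\<close>.\<close>
lemma minimal_majorant_contact_hull:
  fixes pts :: "'a::finite \<Rightarrow> real^'d::finite"
  assumes maj: "affine_majorant pts lam c b"
    and min: "\<And>c' b'. affine_majorant pts lam c' b' \<Longrightarrow> c \<bullet> x + b \<le> c' \<bullet> x + b'"
  shows "x \<in> convex hull (pts ` contact_set pts lam c b)"
proof (rule ccontr)
  define T where "T = contact_set pts lam c b"
  assume "x \<notin> convex hull (pts ` contact_set pts lam c b)"
  moreover have "closed (convex hull (pts ` T))"
    by (rule compact_imp_closed, rule compact_convex_hull, rule finite_imp_compact) simp
  ultimately obtain a0 \<beta> where sep: "a0 \<bullet> x < \<beta>" "\<forall>y\<in>convex hull (pts ` T). a0 \<bullet> y > \<beta>"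
    using separating_hyperplane_closed_point[OF convex_convex_hull] unfolding T_def by blast
  have "0 \<le> a0 \<bullet> pts a + - \<beta>" if "a \<in> T" for a
    using sep(2) hull_inc[of "pts a" "pts ` T"] that by force
  then obtain \<delta> where \<delta>: "\<delta> > 0" "affine_majorant pts lam (c + \<delta> *\<^sub>R a0) (b + \<delta> * - \<beta>)"
    using affine_majorant_refine[OF maj] unfolding T_def by metis
  have "c \<bullet> x + b \<le> (c + \<delta> *\<^sub>R a0) \<bullet> x + (b + \<delta> * - \<beta>)" by (rule min[OF \<delta>(2)])
  moreover have "\<delta> * (a0 \<bullet> x - \<beta>) < 0" using \<delta>(1) sep(1) by (simp add: mult_pos_neg)
  ultimately show False by (simp add: inner_add_left right_diff_distrib)
qed

lemma interior_Union_closed_empty_interior: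
  fixes \<F> :: "'b::euclidean_space set set"
  assumes "finite \<F>" "\<And>A. A \<in> \<F> \<Longrightarrow> closed A \<and> interior A = {}"
  shows "interior (\<Union>\<F>) = {}"
  using assms
proof (induction \<F> rule: finite_induct)
  case (insert A \<F>)
  then have "interior (\<Union>\<F>) = {}" by auto
  then have "interior (A \<union> \<Union>\<F>) = interior A"
    using insert.prems by (intro interior_closed_Un_empty_interior) auto
  then show ?case using insert.prems by auto
qed simp

text \<open>Points of \<open>conv \<A>\<close> off the finitely many lower-dimensional hulls \<open>aff(\<F>)\<close> are covered by
  the contact sets of minimal majorants, and these then span; the rest follows by density.\<close>
lemma full_cells_cover:
  fixes pts :: "'a::finite \<Rightarrow> real^'d::finite"
  assumes sp: "affine hull (range pts) = UNIV" and x: "x \<in> convex hull (range pts)"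
  obtains F where "full_cell pts lam F" "x \<in> convex hull (pts ` F)"
proof -
  define H where "H = convex hull (range pts)"
  define U where "U = \<Union>((\<lambda>T. affine hull (pts ` T)) ` {T. \<not> affinely_spanning pts T})"
  define W where "W = \<Union>((\<lambda>F. convex hull (pts ` F)) ` {F. full_cell pts lam F})"
  have "interior U = {}" unfolding U_def
  proof (rule interior_Union_closed_empty_interior)
    fix A assume "A \<in> (\<lambda>T. affine hull (pts ` T)) ` {T. \<not> affinely_spanning pts T}"
    then obtain T where T: "\<not> affinely_spanning pts T" "A = affine hull (pts ` T)" by auto
    have "interior A = {}"
      using affine_hull_nonempty_interior[of A] T by (auto simp: hull_hull affinely_spanning_def)
    then show "closed A \<and> interior A = {}" using T by simp
  qed simp
  then have "closure (- U) = UNIV" by (simp add: closure_complement)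
  then have dense: "interior H \<subseteq> closure (interior H - U)"
    using open_Int_closure_subset[of "interior H" "- U"] by (simp add: Diff_eq)
  have "closed (convex hull (pts ` F))" for F
    by (rule compact_imp_closed, rule compact_convex_hull, rule finite_imp_compact) simp
  then have "closed W" unfolding W_def by (intro closed_Union) auto
  have sub: "interior H - U \<subseteq> W"
  proof
    fix z assume z: "z \<in> interior H - U"
    then obtain c b where maj: "affine_majorant pts lam c b"
      and min: "\<And>c' b'. affine_majorant pts lam c' b' \<Longrightarrow> c \<bullet> z + b \<le> c' \<bullet> z + b'"
      using exists_minimal_majorant unfolding H_def by blast
    have zT: "z \<in> convex hull (pts ` contact_set pts lam c b)"
      by (rule minimal_majorant_contact_hull[OF maj min])
    then have "affinely_spanning pts (contact_set pts lam c b)"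
      using z convex_hull_subset_affine_hull unfolding U_def by blast
    then show "z \<in> W" using maj zT unfolding W_def full_cell_def by blast
  qed
  have "rel_interior H \<noteq> {}" unfolding H_def by (subst rel_interior_eq_empty) auto
  moreover have "rel_interior H = interior H" by (rule rel_interior_interior) (simp add: H_def sp)
  ultimately have "closure H = closure (interior H)"
    using convex_closure_interior[of H] by (simp add: H_def)
  then have "x \<in> closure (interior H)" using x closure_subset unfolding H_def by blast
  also have "\<dots> \<subseteq> closure W" using dense sub by (metis closure_mono closure_closure subset_trans)
  finally have "x \<in> W" using \<open>closed W\<close> by simp
  then show ?thesis using that unfolding W_def by blast
qed

section \<open>Secondary cones\<close>

definition cell_cone :: "('a::finite \<Rightarrow> real^'d::finite) \<Rightarrow> 'a set \<Rightarrow> (real^'a) set" where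
  "cell_cone pts F = {lam. \<exists>c b. affine_majorant pts lam c b \<and> F \<subseteq> contact_set pts lam c b}"

text \<open>The heights whose subdivision is refined by \<open>S\<close>; by \<open>closure_secondary_class\<close> below this is
  the closed secondary cone of \<open>S\<close>.\<close>
definition secondary_cone :: "('a::finite \<Rightarrow> real^'d::finite) \<Rightarrow> 'a set set \<Rightarrow> (real^'a) set" where
  "secondary_cone pts S = (\<Inter>F \<in> {F. is_facet pts S F}. cell_cone pts F)"

lemma secondary_coneE:
  assumes "lam \<in> secondary_cone pts S" "is_facet pts S F"
  obtains c b where "affine_majorant pts lam c b" "F \<subseteq> contact_set pts lam c b"
  using assms unfolding secondary_cone_def cell_cone_def by blast

lemma reg_subdiv_in_secondary_cone:
  fixes pts :: "'a::finite \<Rightarrow> real^'d::finite"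
  assumes "inj pts"
  shows "lam \<in> secondary_cone pts (reg_subdiv pts lam)"
  unfolding secondary_cone_def cell_cone_def
proof (intro INT_I CollectI)
  fix F assume "F \<in> {F. is_facet pts (reg_subdiv pts lam) F}"
  then have "full_cell pts lam F" using is_facet_reg_subdiv_iff[OF assms] by simp
  then show "\<exists>c b. affine_majorant pts lam c b \<and> F \<subseteq> contact_set pts lam c b"
    unfolding full_cell_def by blast
qed

lemma zero_in_secondary_cone: "0 \<in> secondary_cone pts S"
proof -
  have "affine_majorant pts 0 0 0" "F \<subseteq> contact_set pts 0 0 0" for F
    by (simp_all add: affine_majorant_def contact_set_def)
  then show ?thesis unfolding secondary_cone_def cell_cone_def by blast
qed

lemma affine_majorant_scaleR:
  fixes pts :: "'a::finite \<Rightarrow> real^'d::finite"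
  assumes "0 < t"
  shows "affine_majorant pts (t *\<^sub>R lam) (t *\<^sub>R c) (t * b) \<longleftrightarrow> affine_majorant pts lam c b"
    and "contact_set pts (t *\<^sub>R lam) (t *\<^sub>R c) (t * b) = contact_set pts lam c b"
proof -
  have *: "(t *\<^sub>R c) \<bullet> y + t * b = t * (c \<bullet> y + b)" for y by (simp add: algebra_simps)
  show "affine_majorant pts (t *\<^sub>R lam) (t *\<^sub>R c) (t * b) \<longleftrightarrow> affine_majorant pts lam c b"
    unfolding affine_majorant_def * using assms by simp
  show "contact_set pts (t *\<^sub>R lam) (t *\<^sub>R c) (t * b) = contact_set pts lam c b"
    unfolding contact_set_def * using assms by simp
qed

lemma secondary_cone_scaleR:
  fixes pts :: "'a::finite \<Rightarrow> real^'d::finite"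
  assumes "lam \<in> secondary_cone pts S" "0 < t"
  shows "t *\<^sub>R lam \<in> secondary_cone pts S"
  unfolding secondary_cone_def cell_cone_def
proof (intro INT_I CollectI)
  fix F assume "F \<in> {F. is_facet pts S F}"
  then have "is_facet pts S F" by simp
  then obtain c b where "affine_majorant pts lam c b" "F \<subseteq> contact_set pts lam c b"
    by (rule secondary_coneE[OF assms(1)])
  then show "\<exists>c b. affine_majorant pts (t *\<^sub>R lam) c b \<and> F \<subseteq> contact_set pts (t *\<^sub>R lam) c b"
    by (intro exI[of _ "t *\<^sub>R c"] exI[of _ "t * b"]) (simp add: affine_majorant_scaleR[OF assms(2)])
qed

lemma affine_majorant_add:
  fixes pts :: "'a::finite \<Rightarrow> real^'d::finite"
  assumes "0 < \<epsilon>" "affine_majorant pts lam c b" "affine_majorant pts mu c' b'"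
  shows "affine_majorant pts (lam + \<epsilon> *\<^sub>R mu) (c + \<epsilon> *\<^sub>R c') (b + \<epsilon> * b')"
    and "contact_set pts (lam + \<epsilon> *\<^sub>R mu) (c + \<epsilon> *\<^sub>R c') (b + \<epsilon> * b') =
           contact_set pts lam c b \<inter> contact_set pts mu c' b'"
proof -
  have val: "(c + \<epsilon> *\<^sub>R c') \<bullet> y + (b + \<epsilon> * b') = (c \<bullet> y + b) + \<epsilon> * (c' \<bullet> y + b')" for y
    by (simp add: inner_add_left algebra_simps)
  have l: "lam$a \<le> c \<bullet> pts a + b" and m: "\<epsilon> * mu$a \<le> \<epsilon> * (c' \<bullet> pts a + b')" for a
    using assms by (auto simp: affine_majorant_def)
  show "affine_majorant pts (lam + \<epsilon> *\<^sub>R mu) (c + \<epsilon> *\<^sub>R c') (b + \<epsilon> * b')"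
    unfolding affine_majorant_def val using l m by (simp add: add_mono)
  have "lam$a + \<epsilon> * mu$a = (c \<bullet> pts a + b) + \<epsilon> * (c' \<bullet> pts a + b') \<longleftrightarrow>
        lam$a = c \<bullet> pts a + b \<and> \<epsilon> * mu$a = \<epsilon> * (c' \<bullet> pts a + b')" for a
    using l[of a] m[of a] by linarith
  then show "contact_set pts (lam + \<epsilon> *\<^sub>R mu) (c + \<epsilon> *\<^sub>R c') (b + \<epsilon> * b') =
           contact_set pts lam c b \<inter> contact_set pts mu c' b'"
    unfolding contact_set_def val using assms(1) by auto
qed

lemma full_cell_at_barycenter:
  fixes pts :: "'a::finite \<Rightarrow> real^'d::finite"
  assumes sp: "affine hull (range pts) = UNIV" and "G \<noteq> {}"
  obtains F where "full_cell pts lam F" "barycenter pts G \<in> convex hull (pts ` F)"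
proof -
  have "barycenter pts G \<in> convex hull (range pts)"
    using barycenter_in_convex_hull[OF finite assms(2), of pts] hull_mono[of "pts ` G" "range pts"] by blast
  then show ?thesis using full_cells_cover[OF sp] that by blast
qed

text \<open>A cell \<open>G\<close> of \<open>\<S>_\<mu>\<close> lies in the full cell \<open>F\<close> containing its barycentre, on which \<open>lam\<close>
  is affine; adding the two majorants cuts out \<open>G\<close> again.\<close>
lemma reg_subdiv_subset_perturb:
  fixes pts :: "'a::finite \<Rightarrow> real^'d::finite"
  assumes inj: "inj pts" and sp: "affine hull (range pts) = UNIV"
    and lam: "lam \<in> secondary_cone pts (reg_subdiv pts mu)" and e: "0 < \<epsilon>"
  shows "reg_subdiv pts mu \<subseteq> reg_subdiv pts (lam + \<epsilon> *\<^sub>R mu)"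
proof
  fix G assume "G \<in> reg_subdiv pts mu"
  then obtain c b where maj: "affine_majorant pts mu c b" and G: "G = contact_set pts mu c b" "G \<noteq> {}"
    by (rule reg_subdivE)
  obtain F where F: "full_cell pts mu F" "barycenter pts G \<in> convex hull (pts ` F)"
    using full_cell_at_barycenter[OF sp G(2)] by blast
  obtain c1 b1 where maj1: "affine_majorant pts mu c1 b1" and F1: "F = contact_set pts mu c1 b1"
    using F(1) by (rule full_cellE)
  have GF: "G \<subseteq> F"
    using contact_set_subset_if_barycenter_in_hull[OF maj1 maj _ G(2) F(2)] G(1) F1 by auto
  have "is_facet pts (reg_subdiv pts mu) F" using F(1) is_facet_reg_subdiv_iff[OF inj] by simp
  then obtain c2 b2 where maj2: "affine_majorant pts lam c2 b2" and F2: "F \<subseteq> contact_set pts lam c2 b2"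
    by (rule secondary_coneE[OF lam])
  have "contact_set pts (lam + \<epsilon> *\<^sub>R mu) (c2 + \<epsilon> *\<^sub>R c) (b2 + \<epsilon> * b) = G"
    using affine_majorant_add(2)[OF e maj2 maj] G(1) GF F2 by auto
  then show "G \<in> reg_subdiv pts (lam + \<epsilon> *\<^sub>R mu)"
    using contact_set_in_reg_subdiv[OF affine_majorant_add(1)[OF e maj2 maj]] G(2) by simp
qed

lemma reg_subdiv_perturb_subset:
  fixes pts :: "'a::finite \<Rightarrow> real^'d::finite"
  assumes inj: "inj pts" and sp: "affine hull (range pts) = UNIV"
    and lam: "lam \<in> secondary_cone pts (reg_subdiv pts mu)" and e: "0 < \<epsilon>"
  shows "reg_subdiv pts (lam + \<epsilon> *\<^sub>R mu) \<subseteq> reg_subdiv pts mu"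
proof
  define nu where "nu = lam + \<epsilon> *\<^sub>R mu"
  fix G assume "G \<in> reg_subdiv pts (lam + \<epsilon> *\<^sub>R mu)"
  then obtain c b where maj: "affine_majorant pts nu c b" and G: "G = contact_set pts nu c b" "G \<noteq> {}"
    unfolding nu_def by (rule reg_subdivE)
  obtain F where F: "full_cell pts mu F" "barycenter pts G \<in> convex hull (pts ` F)"
    using full_cell_at_barycenter[OF sp G(2)] by blast
  obtain c1 b1 where maj1: "affine_majorant pts mu c1 b1" and F1: "F = contact_set pts mu c1 b1"
    using F(1) by (rule full_cellE)
  have "is_facet pts (reg_subdiv pts mu) F" using F(1) is_facet_reg_subdiv_iff[OF inj] by simp
  then obtain c2 b2 where maj2: "affine_majorant pts lam c2 b2" and F2: "F \<subseteq> contact_set pts lam c2 b2"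
    by (rule secondary_coneE[OF lam])
  define C where "C = c2 + \<epsilon> *\<^sub>R c1"
  define B where "B = b2 + \<epsilon> * b1"
  have majC: "affine_majorant pts nu C B"
    unfolding C_def B_def nu_def by (rule affine_majorant_add(1)[OF e maj2 maj1])
  have FC: "contact_set pts nu C B = F"
    unfolding C_def B_def nu_def using affine_majorant_add(2)[OF e maj2 maj1] F1 F2 by auto
  have GF: "G \<subseteq> F"
    using contact_set_subset_if_barycenter_in_hull[OF majC maj _ G(2) F(2)] FC G(1) by auto
  have on_F: "nu$a = C \<bullet> pts a + B" "nu$a \<le> c \<bullet> pts a + b" if "a \<in> F" for a
    using that FC maj unfolding contact_set_def affine_majorant_def by auto
  have "0 \<le> (c - C) \<bullet> pts a + (b - B)" if "a \<in> contact_set pts mu c1 b1" for a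
    using on_F[of a] that F1 by (simp add: inner_diff_left)
  then obtain \<delta> where maj_refined: "affine_majorant pts mu (c1 + \<delta> *\<^sub>R (c - C)) (b1 + \<delta> * (b - B))"
    and refined: "contact_set pts mu (c1 + \<delta> *\<^sub>R (c - C)) (b1 + \<delta> * (b - B)) =
       {a \<in> contact_set pts mu c1 b1. (c - C) \<bullet> pts a + (b - B) = 0}"
    by (rule affine_majorant_refine[OF maj1]) blast
  have "{a \<in> contact_set pts mu c1 b1. (c - C) \<bullet> pts a + (b - B) = 0} = G"
    using on_F G(1) GF F1 by (auto simp: contact_set_def inner_diff_left)
  then show "G \<in> reg_subdiv pts mu"
    using contact_set_in_reg_subdiv[OF maj_refined] refined G(2) by simp
qed

lemma reg_subdiv_perturb:
  fixes pts :: "'a::finite \<Rightarrow> real^'d::finite"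
  assumes "inj pts" "affine hull (range pts) = UNIV"
    and "lam \<in> secondary_cone pts (reg_subdiv pts mu)" "0 < \<epsilon>"
  shows "reg_subdiv pts (lam + \<epsilon> *\<^sub>R mu) = reg_subdiv pts mu"
  using reg_subdiv_subset_perturb[OF assms] reg_subdiv_perturb_subset[OF assms] by (rule antisym[rotated])

lemma reg_subdiv_scaleR:
  fixes pts :: "'a::finite \<Rightarrow> real^'d::finite"
  assumes "inj pts" "affine hull (range pts) = UNIV" "0 < t"
  shows "reg_subdiv pts (t *\<^sub>R lam) = reg_subdiv pts lam"
  using reg_subdiv_perturb[OF assms(1,2) zero_in_secondary_cone assms(3)] by simp

definition affine_restrictions :: "('a::finite \<Rightarrow> real^'d::finite) \<Rightarrow> 'a set \<Rightarrow> (real^'a) set" where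
  "affine_restrictions pts F = {lam. \<exists>c b. \<forall>f\<in>F. lam$f = c \<bullet> pts f + b}"

lemma subspace_affine_restrictions: "subspace (affine_restrictions pts F)"
  unfolding subspace_def affine_restrictions_def
proof (intro conjI ballI allI CollectI)
  show "\<exists>c b. \<forall>f\<in>F. (0::real^'a)$f = c \<bullet> pts f + b" by (auto intro!: exI[of _ 0])
next
  fix x y :: "real^'a"
  assume "x \<in> {lam. \<exists>c b. \<forall>f\<in>F. lam$f = c \<bullet> pts f + b}" "y \<in> {lam. \<exists>c b. \<forall>f\<in>F. lam$f = c \<bullet> pts f + b}"
  then obtain c1 b1 c2 b2 where "\<forall>f\<in>F. x$f = c1 \<bullet> pts f + b1" "\<forall>f\<in>F. y$f = c2 \<bullet> pts f + b2" by blast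
  then show "\<exists>c b. \<forall>f\<in>F. (x + y)$f = c \<bullet> pts f + b"
    by (intro exI[of _ "c1 + c2"] exI[of _ "b1 + b2"]) (simp add: inner_add_left)
next
  fix r :: real and x :: "real^'a"
  assume "x \<in> {lam. \<exists>c b. \<forall>f\<in>F. lam$f = c \<bullet> pts f + b}"
  then obtain c1 b1 where "\<forall>f\<in>F. x$f = c1 \<bullet> pts f + b1" by blast
  then show "\<exists>c b. \<forall>f\<in>F. (r *\<^sub>R x)$f = c \<bullet> pts f + b"
    by (intro exI[of _ "r *\<^sub>R c1"] exI[of _ "r * b1"]) (simp add: algebra_simps)
qed

lemma cell_cone_eq:
  fixes pts :: "'a::finite \<Rightarrow> real^'d::finite"
  assumes U: "\<And>a. sum (U a) F = 1" "\<And>a. (\<Sum>f\<in>F. U a f *\<^sub>R pts f) = pts a"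
  shows "cell_cone pts F = affine_restrictions pts F \<inter> (\<Inter>a. {lam. lam$a \<le> (\<Sum>f\<in>F. U a f * lam$f)})"
proof -
  have ext: "(\<Sum>f\<in>F. U a f * lam$f) = c \<bullet> pts a + b" if "\<forall>f\<in>F. lam$f = c \<bullet> pts f + b" for lam c b a
    using that inner_affine_combination[of "U a" F c pts b] U[of a] by simp
  show ?thesis
  proof (intro set_eqI iffI)
    fix lam assume "lam \<in> cell_cone pts F"
    then obtain c b where maj: "affine_majorant pts lam c b" and F: "\<forall>f\<in>F. lam$f = c \<bullet> pts f + b"
      unfolding cell_cone_def contact_set_def by blast
    then have "lam$a \<le> (\<Sum>f\<in>F. U a f * lam$f)" for a
      using ext[OF F] by (simp add: affine_majorant_def)
    then show "lam \<in> affine_restrictions pts F \<inter> (\<Inter>a. {lam. lam$a \<le> (\<Sum>f\<in>F. U a f * lam$f)})"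
      using F unfolding affine_restrictions_def by blast
  next
    fix lam assume lam: "lam \<in> affine_restrictions pts F \<inter> (\<Inter>a. {lam. lam$a \<le> (\<Sum>f\<in>F. U a f * lam$f)})"
    then obtain c b where F: "\<forall>f\<in>F. lam$f = c \<bullet> pts f + b" unfolding affine_restrictions_def by blast
    have "lam$a \<le> c \<bullet> pts a + b" for a
    proof -
      have "lam$a \<le> (\<Sum>f\<in>F. U a f * lam$f)" using lam by blast
      then show ?thesis using ext[OF F, of a] by simp
    qed
    then show "lam \<in> cell_cone pts F"
      using F unfolding cell_cone_def affine_majorant_def contact_set_def by blast
  qed
qed

lemma polyhedron_cell_cone:
  fixes pts :: "'a::finite \<Rightarrow> real^'d::finite"
  assumes "inj pts" and "affinely_spanning pts F"
  shows "polyhedron (cell_cone pts F)"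
proof -
  obtain V where V: "\<And>x. sum (V x) F = 1" "\<And>x. (\<Sum>f\<in>F. V x f *\<^sub>R pts f) = x"
    using affinely_spanning_affine_coordinates[OF assms] by blast
  define U where "U a = V (pts a)" for a
  have U: "\<And>a. sum (U a) F = 1" "\<And>a. (\<Sum>f\<in>F. U a f *\<^sub>R pts f) = pts a"
    using V by (simp_all add: U_def)
  have halfspace_eq: "{lam :: real^'a. lam$a \<le> (\<Sum>f\<in>F. U a f * lam$f)} =
        {lam. (axis a 1 - (\<Sum>f\<in>F. U a f *\<^sub>R axis f 1)) \<bullet> lam \<le> 0}" for a
    by (auto simp: inner_diff_left inner_sum_left inner_axis')
  have "polyhedron (\<Inter>a. {lam :: real^'a. lam$a \<le> (\<Sum>f\<in>F. U a f * lam$f)})"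
    by (intro polyhedron_Inter) (auto simp: halfspace_eq polyhedron_halfspace_le)
  moreover have "polyhedron (affine_restrictions pts F)"
    by (intro affine_imp_polyhedron subspace_imp_affine subspace_affine_restrictions)
  ultimately show ?thesis unfolding cell_cone_eq[OF U] by (intro polyhedron_Int)
qed

lemma polyhedron_secondary_cone:
  fixes pts :: "'a::finite \<Rightarrow> real^'d::finite"
  assumes "inj pts"
  shows "polyhedron (secondary_cone pts S)"
  unfolding secondary_cone_def
  by (intro polyhedron_Inter) (auto intro!: polyhedron_cell_cone[OF assms] is_facet_affinely_spanning)

lemma closure_secondary_class:
  fixes pts :: "'a::finite \<Rightarrow> real^'d::finite"
  assumes inj: "inj pts" and sp: "affine hull (range pts) = UNIV"
  shows "closure {mu. reg_subdiv pts mu = reg_subdiv pts lam} = secondary_cone pts (reg_subdiv pts lam)"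
proof
  have "{mu. reg_subdiv pts mu = reg_subdiv pts lam} \<subseteq> secondary_cone pts (reg_subdiv pts lam)"
  proof
    fix mu assume "mu \<in> {mu. reg_subdiv pts mu = reg_subdiv pts lam}"
    then show "mu \<in> secondary_cone pts (reg_subdiv pts lam)"
      using reg_subdiv_in_secondary_cone[OF inj, of mu] by simp
  qed
  then show "closure {mu. reg_subdiv pts mu = reg_subdiv pts lam} \<subseteq> secondary_cone pts (reg_subdiv pts lam)"
    using polyhedron_imp_closed[OF polyhedron_secondary_cone[OF inj]] by (rule closure_minimal)
  show "secondary_cone pts (reg_subdiv pts lam) \<subseteq> closure {mu. reg_subdiv pts mu = reg_subdiv pts lam}"
  proof
    fix lam' assume lam': "lam' \<in> secondary_cone pts (reg_subdiv pts lam)"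
    define s where "s n = lam' + inverse (real (Suc n)) *\<^sub>R lam" for n
    have "reg_subdiv pts (s n) = reg_subdiv pts lam" for n
      unfolding s_def by (rule reg_subdiv_perturb[OF inj sp lam']) simp
    moreover have "s \<longlonglongrightarrow> lam' + 0 *\<^sub>R lam"
      unfolding s_def by (intro tendsto_intros LIMSEQ_inverse_real_of_nat)
    ultimately show "lam' \<in> closure {mu. reg_subdiv pts mu = reg_subdiv pts lam}"
      unfolding closure_sequential by auto
  qed
qed

section \<open>Faces of the secondary fan\<close>

lemma rel_interior_extend:
  fixes S :: "'b::euclidean_space set"
  assumes "convex S" "x \<in> rel_interior S" "y \<in> S"
  obtains \<epsilon> where "\<epsilon> > 0" "x + \<epsilon> *\<^sub>R (x - y) \<in> S"
proof -
  obtain e where "e > 1" "(1 - e) *\<^sub>R y + e *\<^sub>R x \<in> S"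
    using convex_rel_interior_if2[OF assms(1,2)] assms(3) hull_subset[of S affine] by blast
  moreover have "(1 - e) *\<^sub>R y + e *\<^sub>R x = x + (e - 1) *\<^sub>R (x - y)" by (simp add: algebra_simps)
  ultimately show ?thesis using that[of "e - 1"] by simp
qed

text \<open>The inequalities defining the cell cone of a full cell of \<open>\<mu>\<close> that are not tight at \<open>\<mu>\<close>
  hold with a margin, so \<open>\<mu>\<close> lies in the interior of the segment through it from any \<open>lam'\<close>.\<close>
lemma cell_cone_extend:
  fixes pts :: "'a::finite \<Rightarrow> real^'d::finite"
  assumes maj: "affine_majorant pts mu c b" and F: "F = contact_set pts mu c b"
    and lam': "lam' \<in> cell_cone pts F"
  shows "eventually (\<lambda>\<epsilon>. mu + \<epsilon> *\<^sub>R (mu - lam') \<in> cell_cone pts F) (at_right 0)"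
proof -
  obtain c' b' where maj': "affine_majorant pts lam' c' b'" and F': "F \<subseteq> contact_set pts lam' c' b'"
    using lam' unfolding cell_cone_def by blast
  define g where "g a = c \<bullet> pts a + b - mu$a" for a
  define D where "D a = c' \<bullet> pts a + b' - lam'$a" for a
  have gap: "0 < g a" if "a \<in> -F" for a
    using that maj F unfolding g_def contact_set_def affine_majorant_def by (simp add: order_less_le)
  have on_F: "g a = 0" "D a = 0" if "a \<in> F" for a
    using that F F' by (auto simp: g_def D_def contact_set_def)
  have D: "0 \<le> D a" for a using maj' by (simp add: D_def affine_majorant_def)
  obtain e0 where e0: "e0 > 0" "\<And>a. a \<in> -F \<Longrightarrow> e0 * \<bar>D a\<bar> < g a"
    using exists_uniform_margin[of "-F" g D] gap by auto
  have "mu + e *\<^sub>R (mu - lam') \<in> cell_cone pts F" if e: "0 < e" "e < e0" for e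
  proof -
    define C where "C = (1 + e) *\<^sub>R c - e *\<^sub>R c'"
    define B where "B = (1 + e) * b - e * b'"
    have key: "C \<bullet> pts a + B - (mu + e *\<^sub>R (mu - lam'))$a = (1 + e) * g a - e * D a" for a
      unfolding C_def B_def g_def D_def by (simp add: inner_diff_left algebra_simps)
    have nonneg: "0 \<le> (1 + e) * g a - e * D a" for a
    proof (cases "a \<in> F")
      case False
      have "e * D a \<le> e0 * \<bar>D a\<bar>" using e D[of a] by (simp add: mult_right_mono)
      moreover have "e0 * \<bar>D a\<bar> < g a" "g a \<le> (1 + e) * g a" using False e e0 gap[of a] by auto
      ultimately show ?thesis by linarith
    qed (simp add: on_F)
    have "affine_majorant pts (mu + e *\<^sub>R (mu - lam')) C B" unfolding affine_majorant_def
    proof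
      fix a show "(mu + e *\<^sub>R (mu - lam'))$a \<le> C \<bullet> pts a + B" using key[of a] nonneg[of a] by linarith
    qed
    moreover have "F \<subseteq> contact_set pts (mu + e *\<^sub>R (mu - lam')) C B"
    proof
      fix a assume "a \<in> F"
      then show "a \<in> contact_set pts (mu + e *\<^sub>R (mu - lam')) C B"
        using key[of a] on_F[of a] unfolding contact_set_def by simp
    qed
    ultimately show ?thesis unfolding cell_cone_def by blast
  qed
  then show ?thesis unfolding eventually_at_right_field using e0(1) by blast
qed

lemma secondary_cone_extend:
  fixes pts :: "'a::finite \<Rightarrow> real^'d::finite"
  assumes inj: "inj pts" and lam': "lam' \<in> secondary_cone pts (reg_subdiv pts mu)"
  obtains \<epsilon> where "\<epsilon> > 0" "mu + \<epsilon> *\<^sub>R (mu - lam') \<in> secondary_cone pts (reg_subdiv pts mu)"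
proof -
  have "eventually (\<lambda>\<epsilon>. mu + \<epsilon> *\<^sub>R (mu - lam') \<in> cell_cone pts F) (at_right 0)"
    if facet: "is_facet pts (reg_subdiv pts mu) F" for F
  proof -
    have "full_cell pts mu F" using facet is_facet_reg_subdiv_iff[OF inj] by simp
    then obtain c b where "affine_majorant pts mu c b" "F = contact_set pts mu c b" by (rule full_cellE)
    moreover have "lam' \<in> cell_cone pts F" using lam' facet unfolding secondary_cone_def by blast
    ultimately show ?thesis by (rule cell_cone_extend)
  qed
  then have "eventually (\<lambda>\<epsilon>. \<forall>F\<in>{F. is_facet pts (reg_subdiv pts mu) F}.
      mu + \<epsilon> *\<^sub>R (mu - lam') \<in> cell_cone pts F) (at_right 0)"
    by (intro eventually_ball_finite) auto
  then have "eventually (\<lambda>\<epsilon>. mu + \<epsilon> *\<^sub>R (mu - lam') \<in> secondary_cone pts (reg_subdiv pts mu)) (at_right 0)"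
    unfolding secondary_cone_def by simp
  then obtain b where "b > 0" "\<And>\<epsilon>. 0 < \<epsilon> \<Longrightarrow> \<epsilon> < b \<Longrightarrow> mu + \<epsilon> *\<^sub>R (mu - lam') \<in> secondary_cone pts (reg_subdiv pts mu)"
    unfolding eventually_at_right_field by auto
  then show ?thesis using that[of "b / 2"] by simp
qed

text \<open>If \<open>(1 + \<epsilon>) lam\<close> is a positive combination of \<open>l\<^sub>2, l' \<in> \<sigma>\<close>, their majorants on the full
  cell of \<open>\<S>_{lam\<^sub>0}\<close> containing the barycentre of a full cell \<open>F\<close> of \<open>lam\<close> add up to a
  majorant of \<open>(1 + \<epsilon>) lam\<close>, which must then be tight on \<open>F\<close>.\<close>
lemma cell_cone_of_positive_combination:
  fixes pts :: "'a::finite \<Rightarrow> real^'d::finite"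
  assumes inj: "inj pts" and sp: "affine hull (range pts) = UNIV" and e: "0 < \<epsilon>"
    and l2: "l2 \<in> secondary_cone pts (reg_subdiv pts lam0)"
    and l': "l' \<in> secondary_cone pts (reg_subdiv pts lam0)"
    and comb: "l2 + \<epsilon> *\<^sub>R l' = (1 + \<epsilon>) *\<^sub>R lam" and F: "full_cell pts lam F"
  shows "l' \<in> cell_cone pts F"
proof -
  obtain c b where maj: "affine_majorant pts lam c b" and Fc: "F = contact_set pts lam c b"
    and spF: "affinely_spanning pts F"
    using F by (rule full_cellE)
  have Fne: "F \<noteq> {}" using spF by (rule affinely_spanning_nonempty)
  obtain F1 where F1: "full_cell pts lam0 F1" "barycenter pts F \<in> convex hull (pts ` F1)"
    using full_cell_at_barycenter[OF sp Fne] by blast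
  have facF1: "is_facet pts (reg_subdiv pts lam0) F1" using F1(1) is_facet_reg_subdiv_iff[OF inj] by simp
  obtain c2 b2 where maj2: "affine_majorant pts l2 c2 b2" and F12: "F1 \<subseteq> contact_set pts l2 c2 b2"
    by (rule secondary_coneE[OF l2 facF1])
  obtain c1 b1 where maj1: "affine_majorant pts l' c1 b1" and F11: "F1 \<subseteq> contact_set pts l' c1 b1"
    by (rule secondary_coneE[OF l' facF1])
  have e1: "0 < 1 + \<epsilon>" using e by simp
  have sum_contact: "contact_set pts ((1 + \<epsilon>) *\<^sub>R lam) (c2 + \<epsilon> *\<^sub>R c1) (b2 + \<epsilon> * b1) =
      contact_set pts l2 c2 b2 \<inter> contact_set pts l' c1 b1"
    using affine_majorant_add(2)[OF e maj2 maj1] comb by simp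
  have "F \<subseteq> contact_set pts ((1 + \<epsilon>) *\<^sub>R lam) (c2 + \<epsilon> *\<^sub>R c1) (b2 + \<epsilon> * b1)"
  proof (rule contact_set_subset_if_barycenter_in_hull[OF _ _ _ Fne F1(2)])
    show "affine_majorant pts ((1 + \<epsilon>) *\<^sub>R lam) (c2 + \<epsilon> *\<^sub>R c1) (b2 + \<epsilon> * b1)"
      using affine_majorant_add(1)[OF e maj2 maj1] comb by simp
    show "affine_majorant pts ((1 + \<epsilon>) *\<^sub>R lam) ((1 + \<epsilon>) *\<^sub>R c) ((1 + \<epsilon>) * b)"
      by (rule affine_majorant_scaleR(1)[OF e1, THEN iffD2, OF maj])
    show "F \<subseteq> contact_set pts ((1 + \<epsilon>) *\<^sub>R lam) ((1 + \<epsilon>) *\<^sub>R c) ((1 + \<epsilon>) * b)"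
      unfolding affine_majorant_scaleR(2)[OF e1] Fc ..
    show "F1 \<subseteq> contact_set pts ((1 + \<epsilon>) *\<^sub>R lam) (c2 + \<epsilon> *\<^sub>R c1) (b2 + \<epsilon> * b1)"
      using sum_contact F11 F12 by blast
  qed
  then have "F \<subseteq> contact_set pts l' c1 b1" using sum_contact by blast
  then show ?thesis using maj1 unfolding cell_cone_def by blast
qed

lemma subset_secondary_cone_rel_interior:
  fixes pts :: "'a::finite \<Rightarrow> real^'d::finite"
  assumes inj: "inj pts" and sp: "affine hull (range pts) = UNIV"
    and "convex \<sigma>" and \<sigma>: "\<sigma> \<subseteq> secondary_cone pts (reg_subdiv pts lam0)" and lam: "lam \<in> rel_interior \<sigma>"
  shows "\<sigma> \<subseteq> secondary_cone pts (reg_subdiv pts lam)"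
proof
  fix l' assume l': "l' \<in> \<sigma>"
  obtain \<epsilon> where e: "\<epsilon> > 0" and l2: "lam + \<epsilon> *\<^sub>R (lam - l') \<in> \<sigma>"
    using rel_interior_extend[OF assms(3) lam l'] by blast
  have comb: "(lam + \<epsilon> *\<^sub>R (lam - l')) + \<epsilon> *\<^sub>R l' = (1 + \<epsilon>) *\<^sub>R lam" by (simp add: algebra_simps)
  have l2Q: "lam + \<epsilon> *\<^sub>R (lam - l') \<in> secondary_cone pts (reg_subdiv pts lam0)" using l2 \<sigma> by blast
  have l'Q: "l' \<in> secondary_cone pts (reg_subdiv pts lam0)" using l' \<sigma> by blast
  have "l' \<in> cell_cone pts F" if "is_facet pts (reg_subdiv pts lam) F" for F
  proof -
    have "full_cell pts lam F" using that is_facet_reg_subdiv_iff[OF inj] by simp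
    with l2Q l'Q show ?thesis by (rule cell_cone_of_positive_combination[OF inj sp e _ _ comb])
  qed
  then show "l' \<in> secondary_cone pts (reg_subdiv pts lam)" unfolding secondary_cone_def by blast
qed

lemma secondary_cone_reg_subdiv_subset:
  fixes pts :: "'a::finite \<Rightarrow> real^'d::finite"
  assumes inj: "inj pts" and lam: "lam \<in> secondary_cone pts S"
  shows "secondary_cone pts (reg_subdiv pts lam) \<subseteq> secondary_cone pts S"
proof
  fix l' assume l': "l' \<in> secondary_cone pts (reg_subdiv pts lam)"
  show "l' \<in> secondary_cone pts S" unfolding secondary_cone_def cell_cone_def
  proof (intro INT_I CollectI)
    fix F0 assume "F0 \<in> {F. is_facet pts S F}"
    then have facF0: "is_facet pts S F0" by simp
    obtain c b where maj: "affine_majorant pts lam c b" and F0: "F0 \<subseteq> contact_set pts lam c b"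
      by (rule secondary_coneE[OF lam facF0])
    have "affinely_spanning pts (contact_set pts lam c b)"
      using affinely_spanning_mono[OF is_facet_affinely_spanning[OF facF0] F0] .
    then have "is_facet pts (reg_subdiv pts lam) (contact_set pts lam c b)"
      using is_facet_reg_subdiv_iff[OF inj] maj unfolding full_cell_def by blast
    then obtain c' b' where "affine_majorant pts l' c' b'" "contact_set pts lam c b \<subseteq> contact_set pts l' c' b'"
      by (rule secondary_coneE[OF l'])
    then show "\<exists>c b. affine_majorant pts l' c b \<and> F0 \<subseteq> contact_set pts l' c b" using F0 by blast
  qed
qed

lemma secondary_cone_subset_face:
  fixes pts :: "'a::finite \<Rightarrow> real^'d::finite"
  assumes inj: "inj pts" and face: "\<sigma> face_of secondary_cone pts S" and lam: "lam \<in> \<sigma>"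
  shows "secondary_cone pts (reg_subdiv pts lam) \<subseteq> \<sigma>"
proof
  fix l' assume l': "l' \<in> secondary_cone pts (reg_subdiv pts lam)"
  show "l' \<in> \<sigma>"
  proof (cases "l' = lam")
    case False
    obtain \<epsilon> where e: "\<epsilon> > 0" and l3: "lam + \<epsilon> *\<^sub>R (lam - l') \<in> secondary_cone pts (reg_subdiv pts lam)"
      using secondary_cone_extend[OF inj l'] by blast
    define l3 where "l3 = lam + \<epsilon> *\<^sub>R (lam - l')"
    have "lam \<in> secondary_cone pts S" using face_of_imp_subset[OF face] lam by blast
    then have in_S: "l' \<in> secondary_cone pts S" "l3 \<in> secondary_cone pts S"
      using secondary_cone_reg_subdiv_subset[OF inj] l' l3 unfolding l3_def by blast+
    have "l' \<noteq> l3"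
    proof
      assume "l' = l3"
      then have "(1 + \<epsilon>) *\<^sub>R (l' - lam) = 0" unfolding l3_def by (simp add: algebra_simps)
      then show False using e False by simp
    qed
    moreover have "lam = (1 - 1 / (1 + \<epsilon>)) *\<^sub>R l' + (1 / (1 + \<epsilon>)) *\<^sub>R l3"
    proof -
      have "(1 + \<epsilon>) *\<^sub>R ((1 - 1 / (1 + \<epsilon>)) *\<^sub>R l' + (1 / (1 + \<epsilon>)) *\<^sub>R l3) = (1 + \<epsilon>) *\<^sub>R lam"
        unfolding l3_def using e by (simp add: algebra_simps field_simps)
      then show ?thesis using e by simp
    qed
    moreover have "0 < 1 / (1 + \<epsilon>)" "1 / (1 + \<epsilon>) < 1" using e by auto
    ultimately have "lam \<in> open_segment l' l3" unfolding in_segment by blast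
    then show ?thesis using face_ofD[OF face _ in_S lam] by blast
  qed (use lam in simp)
qed

lemma cone_subdiv_secondary_cone:
  fixes pts :: "'a::finite \<Rightarrow> real^'d::finite"
  assumes inj: "inj pts" and sp: "affine hull (range pts) = UNIV"
    and lam: "lam \<in> rel_interior \<sigma>" and \<sigma>: "\<sigma> = secondary_cone pts (reg_subdiv pts lam)"
  shows "cone_subdiv pts \<sigma> = reg_subdiv pts lam"
  unfolding cone_subdiv_def
proof (rule the_equality)
  show "closure {mu. reg_subdiv pts mu = reg_subdiv pts lam} = \<sigma>"
    using closure_secondary_class[OF inj sp] \<sigma> by simp
next
  fix S1 assume S1: "closure {mu. reg_subdiv pts mu = S1} = \<sigma>"
  then obtain mu1 where mu1: "reg_subdiv pts mu1 = S1" using lam rel_interior_subset by fastforce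
  have \<sigma>1: "\<sigma> = secondary_cone pts (reg_subdiv pts mu1)"
    using S1 closure_secondary_class[OF inj sp, of mu1] mu1 by simp
  have "convex \<sigma>" unfolding \<sigma> by (rule polyhedron_imp_convex[OF polyhedron_secondary_cone[OF inj]])
  moreover have "mu1 \<in> \<sigma>" unfolding \<sigma>1 by (rule reg_subdiv_in_secondary_cone[OF inj])
  ultimately obtain \<epsilon> where e: "\<epsilon> > 0" and l0: "lam + \<epsilon> *\<^sub>R (lam - mu1) \<in> \<sigma>"
    using rel_interior_extend[OF _ lam] by blast
  text \<open>\<open>(1 + \<epsilon>) lam\<close> is a perturbation of \<open>mu1\<close> by a point of its closed secondary cone.\<close>
  have "reg_subdiv pts ((lam + \<epsilon> *\<^sub>R (lam - mu1)) + \<epsilon> *\<^sub>R mu1) = reg_subdiv pts mu1"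
    by (rule reg_subdiv_perturb[OF inj sp _ e]) (use l0 \<sigma>1 in simp)
  moreover have "(lam + \<epsilon> *\<^sub>R (lam - mu1)) + \<epsilon> *\<^sub>R mu1 = (1 + \<epsilon>) *\<^sub>R lam" by (simp add: algebra_simps)
  moreover have "reg_subdiv pts ((1 + \<epsilon>) *\<^sub>R lam) = reg_subdiv pts lam"
    by (rule reg_subdiv_scaleR[OF inj sp]) (use e in simp)
  ultimately show "S1 = reg_subdiv pts lam" using mu1 by simp
qed

lemma secondary_fan_face:
  fixes pts :: "'a::finite \<Rightarrow> real^'d::finite"
  assumes inj: "inj pts" and sp: "affine hull (range pts) = UNIV"
    and tau: "\<tau> \<in> secondary_fan pts" and face: "cone_face \<sigma> \<tau>"
  obtains lam where "lam \<in> \<sigma>" "\<sigma> = secondary_cone pts (reg_subdiv pts lam)"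
    "cone_subdiv pts \<sigma> = reg_subdiv pts lam"
proof -
  obtain lam0 where tau: "\<tau> = secondary_cone pts (reg_subdiv pts lam0)"
    using tau closure_secondary_class[OF inj sp] unfolding secondary_fan_def by blast
  have face: "\<sigma> face_of \<tau>" and "\<sigma> \<noteq> {}" using face unfolding cone_face_def by auto
  moreover have "convex \<sigma>" using face by (rule face_of_imp_convex)
  ultimately obtain lam where lam: "lam \<in> rel_interior \<sigma>" using rel_interior_eq_empty by blast
  have lam\<sigma>: "lam \<in> \<sigma>" using lam rel_interior_subset by blast
  have "\<sigma> = secondary_cone pts (reg_subdiv pts lam)"
  proof
    show "\<sigma> \<subseteq> secondary_cone pts (reg_subdiv pts lam)"
      using subset_secondary_cone_rel_interior[OF inj sp \<open>convex \<sigma>\<close> _ lam] face_of_imp_subset[OF face] tau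
      by simp
    show "secondary_cone pts (reg_subdiv pts lam) \<subseteq> \<sigma>"
      using secondary_cone_subset_face[OF inj _ lam\<sigma>] face tau by simp
  qed
  then show ?thesis using that lam\<sigma> cone_subdiv_secondary_cone[OF inj sp lam] by blast
qed

lemma secondary_fan_facet:
  fixes pts :: "'a::finite \<Rightarrow> real^'d::finite"
  assumes inj: "inj pts" and sp: "affine hull (range pts) = UNIV"
    and tau: "\<tau> \<in> secondary_fan pts" and face: "cone_face \<sigma> \<tau>" and facet: "is_facet pts (cone_subdiv pts \<sigma>) F"
  obtains lam c b where "lam \<in> \<sigma>" "\<sigma> = secondary_cone pts (reg_subdiv pts lam)"
    "is_facet pts (reg_subdiv pts lam) F" "affine_majorant pts lam c b" "F = contact_set pts lam c b"
    "affinely_spanning pts F"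
proof -
  obtain lam where lam: "lam \<in> \<sigma>" "\<sigma> = secondary_cone pts (reg_subdiv pts lam)"
    and cs: "cone_subdiv pts \<sigma> = reg_subdiv pts lam"
    by (rule secondary_fan_face[OF inj sp tau face])
  have facet': "is_facet pts (reg_subdiv pts lam) F" using facet cs by simp
  then have "full_cell pts lam F" using is_facet_reg_subdiv_iff[OF inj] by simp
  then obtain c b where "affine_majorant pts lam c b" "F = contact_set pts lam c b" "affinely_spanning pts F"
    by (rule full_cellE)
  with lam facet' show ?thesis using that by blast
qed

section \<open>Linear growth on polyhedral cones\<close>

lemma convex_hull_abs_linear_le:
  fixes g \<psi> :: "'b::real_vector \<Rightarrow> real"
  assumes "finite V" "linear g" "linear \<psi>" and V: "\<And>v. v \<in> V \<Longrightarrow> \<bar>\<psi> v\<bar> \<le> C * - g v"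
    and q: "q \<in> convex hull V"
  shows "\<bar>\<psi> q\<bar> \<le> C * - g q"
proof -
  obtain u where u: "\<forall>x\<in>V. 0 \<le> u x" "sum u V = 1" "(\<Sum>x\<in>V. u x *\<^sub>R x) = q"
    using q convex_hull_finite[OF assms(1)] by auto
  have lin: "h q = (\<Sum>x\<in>V. u x * h x)" if "linear h" for h :: "'b \<Rightarrow> real"
    using u(3) that by (auto simp: linear_sum linear_scale)
  have "\<bar>\<psi> q\<bar> = \<bar>\<Sum>x\<in>V. u x * \<psi> x\<bar>" using lin[OF assms(3)] by simp
  also have "\<dots> \<le> (\<Sum>x\<in>V. \<bar>u x * \<psi> x\<bar>)" by (rule sum_abs)
  also have "\<dots> = (\<Sum>x\<in>V. u x * \<bar>\<psi> x\<bar>)" using u(1) by (simp add: abs_mult)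
  also have "\<dots> \<le> (\<Sum>x\<in>V. u x * (C * - g x))"
    using u(1) V by (intro sum_mono mult_left_mono) auto
  also have "\<dots> = C * - g q"
    using lin[OF assms(2)] by (simp add: sum_distrib_left algebra_simps sum_negf)
  finally show ?thesis .
qed

lemma finite_linear_bound:
  fixes gv :: "'b::real_inner" and \<psi> :: "'b \<Rightarrow> real"
  assumes "finite V" and g: "\<And>v. v \<in> V \<Longrightarrow> gv \<bullet> v \<le> 0"
    and van: "\<And>v. v \<in> V \<Longrightarrow> gv \<bullet> v = 0 \<Longrightarrow> \<psi> v = 0"
  obtains C where "\<And>v. v \<in> V \<Longrightarrow> \<bar>\<psi> v\<bar> \<le> C * - (gv \<bullet> v)"
proof -
  define r where "r v = (if gv \<bullet> v = 0 then 0 else \<bar>\<psi> v\<bar> / - (gv \<bullet> v))" for v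
  define C where "C = (\<Sum>v\<in>V. r v)"
  have "\<bar>\<psi> v\<bar> \<le> C * - (gv \<bullet> v)" if v: "v \<in> V" for v
  proof (cases "gv \<bullet> v = 0")
    case True
    then show ?thesis using van v by simp
  next
    case False
    then have neg: "0 < - (gv \<bullet> v)" using g[OF v] by simp
    have "r x \<ge> 0" if "x \<in> V" for x using g[OF that] by (auto simp: r_def intro!: divide_nonneg_nonpos)
    then have "r v \<le> C" unfolding C_def using v assms(1) by (intro member_le_sum) auto
    then have "r v * - (gv \<bullet> v) \<le> C * - (gv \<bullet> v)" using neg by (intro mult_right_mono) auto
    then show ?thesis unfolding r_def using False neg by simp
  qed
  then show ?thesis by (rule that)
qed

text \<open>Check the bound on the finitely many vertices of the truncation of \<open>K\<close> by a box, then
  rescale.\<close>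
lemma polyhedral_cone_linear_bound:
  fixes K :: "(real^'n::finite) set" and gv :: "real^'n" and \<psi> :: "real^'n \<Rightarrow> real"
  assumes "polyhedron K" and cone: "\<And>x t. x \<in> K \<Longrightarrow> 0 < t \<Longrightarrow> t *\<^sub>R x \<in> K"
    and g: "\<And>x. x \<in> K \<Longrightarrow> gv \<bullet> x \<le> 0" and lin: "linear \<psi>"
    and van: "\<And>x. x \<in> K \<Longrightarrow> gv \<bullet> x = 0 \<Longrightarrow> \<psi> x = 0"
  obtains C where "\<And>x. x \<in> K \<Longrightarrow> \<bar>\<psi> x\<bar> \<le> C * - (gv \<bullet> x)"
proof -
  define P where "P = K \<inter> cbox (- (\<chi> i. 1)) (\<chi> i. 1)"
  have "polyhedron P" unfolding P_def by (intro polyhedron_Int assms(1) polyhedron_interval)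
  moreover have "bounded P" unfolding P_def by (rule bounded_Int) simp
  ultimately have "polytope P" by (simp add: polytope_eq_bounded_polyhedron)
  then obtain V where V: "finite V" "P = convex hull V" unfolding polytope_def by blast
  have VK: "V \<subseteq> K" using V(2) hull_subset[of V convex] unfolding P_def by blast
  obtain C where "\<And>v. v \<in> V \<Longrightarrow> \<bar>\<psi> v\<bar> \<le> C * - (gv \<bullet> v)"
    using finite_linear_bound[OF V(1), of gv \<psi>] g van VK by blast
  then have onP: "\<bar>\<psi> q\<bar> \<le> C * - (gv \<bullet> q)" if "q \<in> P" for q
    using convex_hull_abs_linear_le[OF V(1) _ lin, of "\<lambda>x. gv \<bullet> x" C q] that V(2)
    by (simp add: bounded_linear.linear[OF bounded_linear_inner_right])
  have "\<bar>\<psi> x\<bar> \<le> C * - (gv \<bullet> x)" if x: "x \<in> K" for x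
  proof (cases "x = 0")
    case True then show ?thesis using lin by (simp add: linear_0)
  next
    case False
    define n where "n = norm x"
    have n: "0 < n" using False by (simp add: n_def)
    define q where "q = (1 / n) *\<^sub>R x"
    have "q \<in> K" unfolding q_def using n by (intro cone[OF x]) simp
    moreover have "norm q = 1" using n by (simp add: q_def n_def)
    then have "q \<in> cbox (- (\<chi> i. 1)) (\<chi> i. 1)"
      unfolding mem_box_cart using component_le_norm_cart[of q] by (auto simp: abs_le_iff)
    ultimately have "\<bar>\<psi> q\<bar> \<le> C * - (gv \<bullet> q)" using onP unfolding P_def by blast
    from mult_left_mono[OF this less_imp_le[OF n]]
    have "n * \<bar>\<psi> q\<bar> \<le> n * (C * - (gv \<bullet> q))" .
    moreover have "x = n *\<^sub>R q" using n by (simp add: q_def)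
    then have "\<psi> x = n * \<psi> q" "gv \<bullet> x = n * (gv \<bullet> q)" using lin by (simp_all add: linear_scale)
    ultimately show ?thesis using n by (simp add: abs_mult algebra_simps)
  qed
  then show ?thesis by (rule that)
qed

lemma face_bounded_hyperplane_face:
  fixes v u vbar :: "nat \<Rightarrow> real^'a::finite" and gv :: "real^'a"
  assumes "polyhedron \<sigma>" and cone: "\<And>x t. x \<in> \<sigma> \<Longrightarrow> 0 < t \<Longrightarrow> t *\<^sub>R x \<in> \<sigma>"
    and g: "\<And>x. x \<in> \<sigma> \<Longrightarrow> gv \<bullet> x \<le> 0"
    and u_in: "\<And>i. u i \<in> \<sigma>" and decomp: "\<And>i. v i = u i + vbar i" and "bounded (range vbar)"
    and above: "\<And>i. Z < gv \<bullet> v i"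
  shows "face_bounded (\<sigma> \<inter> {x. gv \<bullet> x = 0}) v"
  unfolding face_bounded_def
proof (intro allI impI)
  fix \<psi> :: "real^'a \<Rightarrow> real" assume h: "linear \<psi> \<and> (\<forall>x\<in>\<sigma> \<inter> {x. gv \<bullet> x = 0}. \<psi> x = 0)"
  obtain C where C: "\<And>x. x \<in> \<sigma> \<Longrightarrow> \<bar>\<psi> x\<bar> \<le> C * - (gv \<bullet> x)"
    using polyhedral_cone_linear_bound[OF assms(1) cone g, of \<psi>] h by blast
  obtain Kp where Kp: "\<And>x. norm (\<psi> x) \<le> Kp * norm x"
    using linear_bounded h by blast
  obtain B where B: "\<And>i. norm (vbar i) \<le> B" using assms(6) unfolding bounded_iff by blast
  have "\<bar>\<psi> (v i)\<bar> \<le> \<bar>C\<bar> * (norm gv * B - Z) + \<bar>Kp\<bar> * B" for i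
  proof -
    have "gv \<bullet> vbar i \<le> norm gv * B"
      using Cauchy_Schwarz_ineq2[of gv "vbar i"] mult_left_mono[OF B[of i] norm_ge_zero[of gv]] by linarith
    then have upper: "- (gv \<bullet> u i) \<le> norm gv * B - Z"
      using above[of i] decomp[of i] by (simp add: inner_add_right)
    have lower: "0 \<le> - (gv \<bullet> u i)" using g[OF u_in] by simp
    have "\<bar>\<psi> (u i)\<bar> \<le> C * - (gv \<bullet> u i)" by (rule C[OF u_in])
    also have "\<dots> \<le> \<bar>C\<bar> * - (gv \<bullet> u i)" using lower by (intro mult_right_mono) auto
    also have "\<dots> \<le> \<bar>C\<bar> * (norm gv * B - Z)" using upper by (intro mult_left_mono) auto
    finally have "\<bar>\<psi> (u i)\<bar> \<le> \<bar>C\<bar> * (norm gv * B - Z)" .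
    moreover have "\<bar>\<psi> (vbar i)\<bar> \<le> \<bar>Kp\<bar> * B"
      using Kp[of "vbar i"] mult_mono[OF abs_ge_self[of Kp] B[of i]] by simp
    moreover have "\<psi> (v i) = \<psi> (u i) + \<psi> (vbar i)" using h decomp[of i] by (simp add: linear_add)
    ultimately show ?thesis by linarith
  qed
  then show "bounded (range (\<lambda>i. \<psi> (v i)))" unfolding bounded_iff by auto
qed

text \<open>Otherwise a subsequence stays bounded relative to the smaller face \<open>\<sigma> \<inter> {gv = 0}\<close>,
  contradicting the minimality of \<open>\<sigma>\<close>.\<close>
lemma min_face_bdd_tendsto_at_bot:
  fixes v u vbar :: "nat \<Rightarrow> real^'a::finite" and gv lam :: "real^'a"
  assumes poly: "polyhedron \<sigma>" and cone: "\<And>x t. x \<in> \<sigma> \<Longrightarrow> 0 < t \<Longrightarrow> t *\<^sub>R x \<in> \<sigma>"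
    and "0 \<in> \<sigma>" and face: "\<sigma> face_of \<tau>"
    and g: "\<And>x. x \<in> \<sigma> \<Longrightarrow> gv \<bullet> x \<le> 0" and lam: "lam \<in> \<sigma>" "gv \<bullet> lam < 0"
    and sigma_min: "\<And>r. strict_mono r \<Longrightarrow> min_face_bdd \<tau> \<sigma> (v \<circ> r)"
    and u_in: "\<And>i. u i \<in> \<sigma>" and decomp: "\<And>i. v i = u i + vbar i" and vbar: "vbar \<longlonglongrightarrow> vlim"
  shows "filterlim (\<lambda>i. gv \<bullet> v i) at_bot sequentially"
  unfolding filterlim_at_bot eventually_sequentially
proof (rule allI, rule ccontr)
  fix Z assume "\<not> (\<exists>N. \<forall>i\<ge>N. gv \<bullet> v i \<le> Z)"
  then have "infinite {i. Z < gv \<bullet> v i}" by (auto simp: infinite_nat_iff_unbounded_le not_le)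
  then obtain r :: "nat \<Rightarrow> nat" where r: "strict_mono r" "\<And>n. Z < gv \<bullet> v (r n)"
    using infinite_enumerate by blast
  define \<sigma>' where "\<sigma>' = \<sigma> \<inter> {x. gv \<bullet> x = 0}"
  have "\<sigma>' face_of \<sigma>" unfolding \<sigma>'_def
    using face_of_Int_supporting_hyperplane_le[OF polyhedron_imp_convex[OF poly] g] by simp
  then have "\<sigma>' face_of \<tau>" using face by (rule face_of_trans)
  moreover have "\<sigma>' \<noteq> {}" using \<open>0 \<in> \<sigma>\<close> unfolding \<sigma>'_def by auto
  ultimately have "cone_face \<sigma>' \<tau>" unfolding cone_face_def by simp
  moreover have "face_bounded \<sigma>' (v \<circ> r)" unfolding \<sigma>'_def
  proof (rule face_bounded_hyperplane_face[OF poly cone g, where u = "u \<circ> r" and vbar = "vbar \<circ> r" and Z = Z])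
    show "bounded (range (vbar \<circ> r))"
      by (rule bounded_subset[OF convergent_imp_bounded[OF vbar]]) auto
    show "(u \<circ> r) i \<in> \<sigma>" for i using u_in by simp
    show "(v \<circ> r) i = (u \<circ> r) i + (vbar \<circ> r) i" for i using decomp by simp
    show "Z < gv \<bullet> (v \<circ> r) i" for i using r(2) by simp
  qed
  ultimately have "\<sigma> \<subseteq> \<sigma>'" using sigma_min[OF r(1)] unfolding min_face_bdd_def by blast
  then show False using lam unfolding \<sigma>'_def by auto
qed

section \<open>Torus orbits\<close>

text \<open>The monomial parametrisation written in logarithmic coordinates \<open>\<xi> = log x\<close>.\<close>
definition toric_point :: "('a::finite \<Rightarrow> real^'d::finite) \<Rightarrow> 'a set \<Rightarrow> real^'a \<Rightarrow> real^'d \<Rightarrow> real^'a" where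
  "toric_point pts F w \<xi> =
     (\<chi> a. if a \<in> F then w$a * exp (pts a \<bullet> \<xi>) / (\<Sum>f\<in>F. w$f * exp (pts f \<bullet> \<xi>)) else 0)"

lemma Xo_eq_range_toric_point:
  fixes pts :: "'a::finite \<Rightarrow> real^'d::finite"
  shows "Xo pts F w = range (toric_point pts F w)"
proof -
  have monom_exp: "monom pts x a = exp (pts a \<bullet> (\<chi> j. ln (x$j)))" if "\<forall>j. 0 < x$j" for x and a
    unfolding monom_def using that by (simp add: exp_sum[symmetric] inner_vec_def)
  show ?thesis
  proof (intro set_eqI iffI)
    fix z assume "z \<in> Xo pts F w"
    then obtain x where x: "\<forall>j. 0 < x$j"
      and z: "z = (\<chi> a. if a \<in> F then w$a * monom pts x a / (\<Sum>f\<in>F. w$f * monom pts x f) else 0)"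
      unfolding Xo_def by blast
    have "z = toric_point pts F w (\<chi> j. ln (x$j))" unfolding z toric_point_def monom_exp[OF x] ..
    then show "z \<in> range (toric_point pts F w)" by blast
  next
    fix z assume "z \<in> range (toric_point pts F w)"
    then obtain \<xi> where z: "z = toric_point pts F w \<xi>" by blast
    define x :: "real^'d" where "x = (\<chi> j. exp (\<xi>$j))"
    have x: "\<forall>j. 0 < x$j" by (simp add: x_def)
    have \<xi>: "(\<chi> j. ln (x$j)) = \<xi>" by (simp add: x_def vec_eq_iff)
    have "z = (\<chi> a. if a \<in> F then w$a * monom pts x a / (\<Sum>f\<in>F. w$f * monom pts x f) else 0)"
      unfolding z toric_point_def monom_exp[OF x] \<xi> ..
    then show "z \<in> Xo pts F w" unfolding Xo_def using x by blast
  qed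
qed

lemma proj_face_toric_point:
  fixes pts :: "'a::finite \<Rightarrow> real^'d::finite"
  assumes F: "F \<noteq> {}" and w: "\<And>a. 0 < w$a"
  shows "proj_face F (toric_point pts UNIV w \<xi>) = toric_point pts F w \<xi>"
proof -
  define e where "e a = w$a * exp (pts a \<bullet> \<xi>)" for a
  have e: "0 < e a" for a using w[of a] by (simp add: e_def)
  have "0 < sum e F" "0 < sum e UNIV" using F e by (auto intro: sum_pos)
  then show ?thesis
    by (simp add: vec_eq_iff proj_face_def toric_point_def e_def[symmetric] sum_divide_distrib[symmetric])
qed

text \<open>Equal projections force \<open>\<xi> - \<xi>'\<close> to be constant on \<open>pts ` F\<close>, hence everywhere.\<close>
lemma toric_point_eq_if_proj_eq:
  fixes pts :: "'a::finite \<Rightarrow> real^'d::finite"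
  assumes inj: "inj pts" and sp: "affinely_spanning pts F" and w: "\<And>a. 0 < w$a"
    and eq: "toric_point pts F w \<xi> = toric_point pts F w \<xi>'"
  shows "toric_point pts UNIV w \<xi> = toric_point pts UNIV w \<xi>'"
proof -
  have F: "F \<noteq> {}" using sp by (rule affinely_spanning_nonempty)
  define T where "T = (\<Sum>f\<in>F. w$f * exp (pts f \<bullet> \<xi>))"
  define T' where "T' = (\<Sum>f\<in>F. w$f * exp (pts f \<bullet> \<xi>'))"
  have T: "0 < T" "0 < T'" unfolding T_def T'_def using F w by (auto intro: sum_pos)
  define L where "L = ln (T / T')"
  have "(\<xi> - \<xi>') \<bullet> pts f + (- L) = 0 \<bullet> pts f + 0" if f: "f \<in> F" for f
  proof -
    have "toric_point pts F w \<xi> $ f = toric_point pts F w \<xi>' $ f" using eq by simp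
    then have "w$f * exp (pts f \<bullet> \<xi>) / T = w$f * exp (pts f \<bullet> \<xi>') / T'"
      using f by (simp add: toric_point_def T_def T'_def)
    then have "exp (pts f \<bullet> \<xi>) = exp (pts f \<bullet> \<xi>') * (T / T')" using T w[of f] by (simp add: field_simps)
    then have "exp (pts f \<bullet> \<xi> - pts f \<bullet> \<xi>') = T / T'" by (simp add: exp_diff field_simps)
    then have "pts f \<bullet> \<xi> - pts f \<bullet> \<xi>' = L" unfolding L_def by (metis ln_exp)
    then have "(\<xi> - \<xi>') \<bullet> pts f = L" by (metis inner_commute inner_diff_left)
    then show ?thesis by simp
  qed
  then have "(\<xi> - \<xi>') \<bullet> pts a + (- L) = 0 \<bullet> pts a + 0" for a
    by (rule affine_eq_if_eq_on_spanning[OF inj sp])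
  then have "(\<xi> - \<xi>') \<bullet> pts a = L" for a by simp
  then have "pts a \<bullet> \<xi> - pts a \<bullet> \<xi>' = L" for a by (metis inner_commute inner_diff_left)
  then have "pts a \<bullet> \<xi> = L + pts a \<bullet> \<xi>'" for a by (simp add: algebra_simps)
  then have ea: "exp (pts a \<bullet> \<xi>) = exp L * exp (pts a \<bullet> \<xi>')" for a by (simp add: exp_add)
  then have "(\<Sum>f\<in>UNIV. w$f * exp (pts f \<bullet> \<xi>)) = exp L * (\<Sum>f\<in>UNIV. w$f * exp (pts f \<bullet> \<xi>'))"
    by (simp add: sum_distrib_left algebra_simps)
  then show ?thesis by (simp add: vec_eq_iff toric_point_def ea)
qed

lemma toric_point_log_ratio:
  fixes pts :: "'a::finite \<Rightarrow> real^'d::finite"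
  assumes F: "F \<noteq> {}" and w: "\<And>a. 0 < w$a" and "f \<in> F" "f0 \<in> F"
  shows "ln (toric_point pts F w \<xi> $ f) - ln (toric_point pts F w \<xi> $ f0)
           = ln (w$f) - ln (w$f0) + (pts f - pts f0) \<bullet> \<xi>"
proof -
  define T where "T = (\<Sum>f\<in>F. w$f * exp (pts f \<bullet> \<xi>))"
  have T: "0 < T" unfolding T_def using F w by (auto intro: sum_pos)
  have "ln (toric_point pts F w \<xi> $ g) = ln (w$g) + pts g \<bullet> \<xi> - ln T" if "g \<in> F" for g
    using that T w[of g] by (simp add: toric_point_def T_def[symmetric] ln_div ln_mult)
  then show ?thesis using assms(3,4) by (simp add: inner_diff_left)
qed

lemma toric_point_of_log_ratio:
  fixes pts :: "'a::finite \<Rightarrow> real^'d::finite"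
  assumes w: "\<And>a. 0 < w$a" and f0: "f0 \<in> F" and y: "y \<in> simplex_face F" and ypos: "\<And>f. f \<in> F \<Longrightarrow> 0 < y$f"
    and ratio: "\<And>f. f \<in> F \<Longrightarrow> ln (y$f) - ln (y$f0) = ln (w$f) - ln (w$f0) + (pts f - pts f0) \<bullet> \<xi>"
  shows "toric_point pts F w \<xi> = y"
proof -
  define e where "e f = w$f * exp (pts f \<bullet> \<xi>)" for f
  have e: "0 < e f" for f using w[of f] by (simp add: e_def)
  define K where "K = y$f0 / e f0"
  have yK: "y$f = K * e f" if f: "f \<in> F" for f
  proof -
    have "ln (y$f) = ln (y$f0) + ln (e f) - ln (e f0)"
      using ratio[OF f] w[of f] w[of f0] by (simp add: e_def ln_mult inner_diff_left)
    then have "y$f = exp (ln (y$f0) + ln (e f) - ln (e f0))" using ypos[OF f] by (metis exp_ln)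
    then show ?thesis using ypos[OF f0] e by (simp add: exp_diff exp_add K_def)
  qed
  have "(\<Sum>f\<in>F. y$f) = (\<Sum>f\<in>UNIV. y$f)"
    using y by (intro sum.mono_neutral_left) (auto simp: simplex_face_def)
  then have "K * (\<Sum>f\<in>F. e f) = 1" using y yK by (simp add: simplex_face_def sum_distrib_left)
  moreover have "0 < (\<Sum>f\<in>F. e f)" using f0 e by (intro sum_pos) auto
  ultimately have K: "K = 1 / (\<Sum>f\<in>F. e f)" by (simp add: field_simps)
  show ?thesis
    using y yK by (auto simp: vec_eq_iff toric_point_def e_def[symmetric] simplex_face_def K)
qed

text \<open>In the log-ratio chart \<open>y \<mapsto> (ln y\<^sub>f - ln y\<^sub>f\<^sub>0)\<^sub>f\<close> the toric variety is an affine subspace,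
  hence closed, and the chart is continuous where the coordinates are positive.\<close>
lemma closure_toric_point_positive:
  fixes pts :: "'a::finite \<Rightarrow> real^'d::finite"
  assumes f0: "f0 \<in> F" and w: "\<And>a. 0 < w$a"
    and ycl: "y \<in> closure (range (toric_point pts F w))" and y: "y \<in> simplex_face F"
    and ypos: "\<And>f. f \<in> F \<Longrightarrow> 0 < y$f"
  shows "y \<in> range (toric_point pts F w)"
proof -
  have F: "F \<noteq> {}" using f0 by auto
  define \<Phi> :: "real^'a \<Rightarrow> real^'a" where
    "\<Phi> z = (\<chi> f. if f \<in> F then ln (z$f) - ln (z$f0) - (ln (w$f) - ln (w$f0)) else 0)" for z
  define L :: "real^'d \<Rightarrow> real^'a" where "L \<xi> = (\<chi> f. if f \<in> F then (pts f - pts f0) \<bullet> \<xi> else 0)" for \<xi>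
  have "linear L" unfolding L_def by (rule linearI) (auto simp: vec_eq_iff inner_add_right)
  then have closed: "closed (range L)"
    using linear_subspace_image[OF _ subspace_UNIV] closed_subspace by blast
  have \<Phi>L: "\<Phi> (toric_point pts F w \<xi>) = L \<xi>" for \<xi>
    by (simp add: vec_eq_iff \<Phi>_def L_def toric_point_log_ratio[OF F w _ f0])
  obtain s where s: "\<And>n. s n \<in> range (toric_point pts F w)" "s \<longlonglongrightarrow> y"
    using ycl closure_sequential by blast
  have lim: "(\<lambda>n. \<Phi> (s n)) \<longlonglongrightarrow> \<Phi> y"
  proof (rule vec_tendstoI)
    fix f
    show "(\<lambda>n. \<Phi> (s n) $ f) \<longlonglongrightarrow> \<Phi> y $ f"
    proof (cases "f \<in> F")
      case True
      have "(\<lambda>n. s n $ f) \<longlonglongrightarrow> y $ f" "(\<lambda>n. s n $ f0) \<longlonglongrightarrow> y $ f0"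
        using s(2) by (auto intro: tendsto_vec_nth)
      then have "(\<lambda>n. ln (s n $ f) - ln (s n $ f0) - (ln (w$f) - ln (w$f0))) \<longlonglongrightarrow>
                 ln (y $ f) - ln (y $ f0) - (ln (w$f) - ln (w$f0))"
        using ypos[OF True] ypos[OF f0] by (intro tendsto_diff tendsto_ln tendsto_const) auto
      then show ?thesis using True by (simp add: \<Phi>_def)
    qed (simp add: \<Phi>_def)
  qed
  have mem: "\<Phi> (s n) \<in> range L" for n
  proof -
    obtain \<xi> where "s n = toric_point pts F w \<xi>" using s(1)[of n] by blast
    then show ?thesis using \<Phi>L by simp
  qed
  have "\<Phi> y \<in> range L" by (rule closed_sequentially[OF closed mem lim])
  then obtain \<xi> where \<xi>: "\<Phi> y = L \<xi>" by blast
  have "toric_point pts F w \<xi> = y"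
  proof (rule toric_point_of_log_ratio[OF w f0 y ypos])
    fix f assume f: "f \<in> F"
    have "\<Phi> y $ f = L \<xi> $ f" using \<xi> by simp
    then show "ln (y$f) - ln (y$f0) = ln (w$f) - ln (w$f0) + (pts f - pts f0) \<bullet> \<xi>"
      using f by (simp add: \<Phi>_def L_def)
  qed
  then show ?thesis by blast
qed

lemma l1dist_toric_point_le:
  fixes pts :: "'a::finite \<Rightarrow> real^'d::finite"
  assumes F: "F \<noteq> {}" and w: "\<And>a. 0 < w$a"
  shows "l1dist (toric_point pts F w \<xi>) (toric_point pts UNIV w \<xi>) \<le>
         2 * (\<Sum>a\<in>-F. w$a * exp (pts a \<bullet> \<xi>) / (\<Sum>f\<in>F. w$f * exp (pts f \<bullet> \<xi>)))"
proof -
  define e where "e a = w$a * exp (pts a \<bullet> \<xi>)" for a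
  define T where "T = sum e F"
  define R where "R = sum e (-F)"
  have e: "0 < e a" for a using w[of a] by (simp add: e_def)
  have T: "0 < T" unfolding T_def using F e by (intro sum_pos) auto
  have R: "0 \<le> R" unfolding R_def using e by (intro sum_nonneg) (auto intro: less_imp_le)
  have split: "sum g UNIV = sum g F + sum g (-F)" for g :: "'a \<Rightarrow> real"
    using sum.subset_diff[of F UNIV g] by (simp add: Compl_eq_Diff_UNIV add.commute)
  have "l1dist (toric_point pts F w \<xi>) (toric_point pts UNIV w \<xi>)
      = (\<Sum>a\<in>F. e a / T - e a / (T + R)) + (\<Sum>a\<in>-F. e a / (T + R))"
  proof -
    have "e a / (T + R) \<le> e a / T" for a using e[of a] T R by (intro divide_left_mono) auto
    moreover have "toric_point pts UNIV w \<xi> $ a = e a / (T + R)" for a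
      using split[of e] by (simp add: toric_point_def e_def[symmetric] T_def R_def)
    moreover have "toric_point pts F w \<xi> $ a = (if a \<in> F then e a / T else 0)" for a
      by (simp add: toric_point_def e_def[symmetric] T_def)
    ultimately show ?thesis unfolding l1dist_def split using e T R by (simp add: add_nonneg_pos abs_of_pos)
  qed
  also have "\<dots> = T / T - T / (T + R) + R / (T + R)"
    by (simp add: sum_subtractf sum_divide_distrib[symmetric] T_def R_def)
  also have "\<dots> = 2 * R / (T + R)"
  proof -
    have "0 < T + R" using T R by simp
    then have "T / T - T / (T + R) = R / (T + R)" using T by (simp add: field_simps)
    then show ?thesis by simp
  qed
  also have "\<dots> \<le> 2 * R / T" using T R by (intro divide_left_mono) auto
  also have "\<dots> = 2 * (\<Sum>a\<in>-F. e a / T)" by (simp add: R_def sum_divide_distrib[symmetric])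
  finally show ?thesis by (simp add: e_def T_def)
qed

definition affine_defect :: "'a::finite set \<Rightarrow> ('a \<Rightarrow> real) \<Rightarrow> 'a \<Rightarrow> real^'a" where
  "affine_defect F U a = axis a 1 - (\<Sum>f\<in>F. U f *\<^sub>R axis f 1)"

lemma inner_affine_defect: "affine_defect F U a \<bullet> x = x$a - (\<Sum>f\<in>F. U f * x$f)"
  by (simp add: affine_defect_def inner_diff_left inner_sum_left inner_axis')

text \<open>With \<open>U\<close> affine coordinates of \<open>pts a\<close> over \<open>pts ` F\<close>, the ratio of the \<open>a\<close>- to the
  \<open>F\<close>-coordinates of a toric point is \<open>exp (defect(ln w) + \<Sum>\<^sub>f U\<^sub>f lg\<^sub>f)\<close>, where the
  \<open>lg\<^sub>f \<in> [ln \<delta>, 0]\<close> are the logarithms of its projection to \<open>\<Delta>\<^sup>F\<close>.\<close>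
lemma toric_point_ratio_le:
  fixes pts :: "'a::finite \<Rightarrow> real^'d::finite"
  assumes F: "F \<noteq> {}" and w: "\<And>a. 0 < w$a"
    and U: "sum U F = 1" "(\<Sum>f\<in>F. U f *\<^sub>R pts f) = pts a"
    and \<delta>: "0 < \<delta>" and y\<delta>: "\<And>f. f \<in> F \<Longrightarrow> \<delta> \<le> toric_point pts F w \<xi> $ f"
  shows "w$a * exp (pts a \<bullet> \<xi>) / (\<Sum>f\<in>F. w$f * exp (pts f \<bullet> \<xi>))
         \<le> exp (affine_defect F U a \<bullet> (\<chi> b. ln (w$b)) + (\<Sum>f\<in>F. \<bar>U f\<bar>) * \<bar>ln \<delta>\<bar>)"
proof -
  define e where "e b = w$b * exp (pts b \<bullet> \<xi>)" for b
  define T where "T = sum e F"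
  define lg where "lg b = ln (w$b) + pts b \<bullet> \<xi> - ln T" for b
  have e: "0 < e b" for b using w[of b] by (simp add: e_def)
  have T: "0 < T" unfolding T_def using F e by (intro sum_pos) auto
  have ln_ratio: "ln (e b / T) = lg b" for b using e[of b] T w[of b] by (simp add: lg_def e_def ln_div ln_mult)
  have "\<bar>lg f\<bar> \<le> \<bar>ln \<delta>\<bar>" if f: "f \<in> F" for f
  proof -
    have "e f \<le> T" unfolding T_def using e f by (intro member_le_sum) (auto intro: less_imp_le)
    then have "lg f \<le> 0" using e[of f] T by (simp flip: ln_ratio)
    moreover have "\<delta> \<le> e f / T" using y\<delta>[OF f] f by (simp add: toric_point_def e_def[symmetric] T_def)
    then have "ln \<delta> \<le> lg f" using \<delta> by (simp flip: ln_ratio)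
    ultimately show ?thesis by linarith
  qed
  then have "(\<Sum>f\<in>F. U f * lg f) \<le> (\<Sum>f\<in>F. \<bar>U f\<bar> * \<bar>ln \<delta>\<bar>)"
    by (intro sum_mono) (metis abs_ge_self abs_mult abs_ge_zero mult_left_mono order.trans)
  moreover have "pts a \<bullet> \<xi> = (\<Sum>f\<in>F. U f * (pts f \<bullet> \<xi>))" using U(2)[symmetric] by (simp add: inner_sum_left)
  then have "(\<Sum>f\<in>F. U f * lg f) = (\<Sum>f\<in>F. U f * ln (w$f)) + pts a \<bullet> \<xi> - ln T"
    using U(1) by (simp add: lg_def algebra_simps sum.distrib sum_subtractf
        sum_distrib_right[symmetric] sum_distrib_left[symmetric])
  ultimately have "lg a \<le> affine_defect F U a \<bullet> (\<chi> b. ln (w$b)) + (\<Sum>f\<in>F. \<bar>U f\<bar>) * \<bar>ln \<delta>\<bar>"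
    by (simp add: inner_affine_defect lg_def sum_distrib_right)
  then have "exp (lg a) \<le> exp (affine_defect F U a \<bullet> (\<chi> b. ln (w$b)) + (\<Sum>f\<in>F. \<bar>U f\<bar>) * \<bar>ln \<delta>\<bar>)"
    by simp
  moreover have "exp (lg a) = e a / T" using e[of a] T by (simp flip: ln_ratio)
  ultimately show ?thesis by (simp add: e_def T_def)
qed

lemma toric_fibre_unique_close:
  fixes pts :: "'a::finite \<Rightarrow> real^'d::finite"
  assumes inj: "inj pts" and spF: "affinely_spanning pts F" and w: "\<And>a. 0 < w$a" and \<delta>: "0 < \<delta>"
    and V: "\<And>x. sum (V x) F = 1" "\<And>x. (\<Sum>f\<in>F. V x f *\<^sub>R pts f) = x"
    and small: "\<forall>a\<in>-F.
      exp (affine_defect F (V (pts a)) a \<bullet> (\<chi> b. ln (w$b)) + (\<Sum>f\<in>F. \<bar>V (pts a) f\<bar>) * \<bar>ln \<delta>\<bar>) \<le> t"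
    and y: "y \<in> Bdelta F \<delta> \<inter> Xcl pts F w"
  shows "\<exists>!z. z \<in> Xo pts UNIV w \<and> proj_face F z = y"
    and "\<And>z. z \<in> Xo pts UNIV w \<Longrightarrow> proj_face F z = y \<Longrightarrow> l1dist y z \<le> 2 * real (card (-F)) * t"
proof -
  have F: "F \<noteq> {}" using spF by (rule affinely_spanning_nonempty)
  then obtain f0 where f0: "f0 \<in> F" by blast
  have ys: "y \<in> simplex_face F" and y\<delta>: "\<And>f. f \<in> F \<Longrightarrow> \<delta> \<le> y$f" using y unfolding Bdelta_def by auto
  have "y \<in> range (toric_point pts F w)"
    using y \<delta> unfolding Xcl_def Xo_eq_range_toric_point
    by (intro closure_toric_point_positive[OF f0 w _ ys]) (auto intro: less_le_trans y\<delta>)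
  then obtain \<xi> where y\<xi>: "y = toric_point pts F w \<xi>" by blast
  have fibre: "z \<in> Xo pts UNIV w \<and> proj_face F z = y \<longleftrightarrow> z = toric_point pts UNIV w \<xi>" for z
  proof
    assume z: "z \<in> Xo pts UNIV w \<and> proj_face F z = y"
    then obtain \<xi>' where z': "z = toric_point pts UNIV w \<xi>'" unfolding Xo_eq_range_toric_point by blast
    have "toric_point pts F w \<xi>' = proj_face F z" unfolding z' by (rule proj_face_toric_point[OF F w, symmetric])
    also have "\<dots> = toric_point pts F w \<xi>" using z y\<xi> by simp
    finally have "toric_point pts F w \<xi>' = toric_point pts F w \<xi>" .
    then show "z = toric_point pts UNIV w \<xi>" unfolding z' by (rule toric_point_eq_if_proj_eq[OF inj spF w])
  qed (simp add: Xo_eq_range_toric_point proj_face_toric_point[OF F w] y\<xi>)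
  then show "\<exists>!z. z \<in> Xo pts UNIV w \<and> proj_face F z = y" by auto
  have "l1dist y (toric_point pts UNIV w \<xi>) \<le> 2 * (\<Sum>a\<in>-F. t)"
  proof -
    have "w$a * exp (pts a \<bullet> \<xi>) / (\<Sum>f\<in>F. w$f * exp (pts f \<bullet> \<xi>)) \<le> t" if a: "a \<in> -F" for a
    proof -
      have "w$a * exp (pts a \<bullet> \<xi>) / (\<Sum>f\<in>F. w$f * exp (pts f \<bullet> \<xi>))
          \<le> exp (affine_defect F (V (pts a)) a \<bullet> (\<chi> b. ln (w$b)) + (\<Sum>f\<in>F. \<bar>V (pts a) f\<bar>) * \<bar>ln \<delta>\<bar>)"
        by (rule toric_point_ratio_le[OF F w V(1) V(2) \<delta>]) (use y\<delta> y\<xi> in simp)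
      also have "\<dots> \<le> t" using small a by simp
      finally show ?thesis .
    qed
    then have "(\<Sum>a\<in>-F. w$a * exp (pts a \<bullet> \<xi>) / (\<Sum>f\<in>F. w$f * exp (pts f \<bullet> \<xi>))) \<le> (\<Sum>a\<in>-F. t)"
      by (rule sum_mono)
    then show ?thesis unfolding y\<xi> using l1dist_toric_point_le[OF F w, of pts \<xi>] by linarith
  qed
  then show "l1dist y z \<le> 2 * real (card (-F)) * t" if "z \<in> Xo pts UNIV w" "proj_face F z = y" for z
    using fibre[of z] that by simp
qed

lemma affine_defect_contact:
  fixes pts :: "'a::finite \<Rightarrow> real^'d::finite"
  assumes U: "sum U F = 1" "(\<Sum>f\<in>F. U f *\<^sub>R pts f) = pts a" and F: "F \<subseteq> contact_set pts lam c b"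
  shows "affine_defect F U a \<bullet> lam = lam$a - (c \<bullet> pts a + b)"
proof -
  have "(\<Sum>f\<in>F. U f * lam$f) = (\<Sum>f\<in>F. U f * (c \<bullet> pts f + b))"
    using F by (intro sum.cong) (auto simp: contact_set_def)
  also have "\<dots> = c \<bullet> pts a + b" using inner_affine_combination[OF U(1), of c pts b] U(2) by simp
  finally show ?thesis by (simp add: inner_affine_defect)
qed

lemma affine_defect_tendsto_at_bot:
  fixes pts :: "'a::finite \<Rightarrow> real^'d::finite" and v u vbar :: "nat \<Rightarrow> real^'a"
  assumes inj: "inj pts" and \<sigma>: "\<sigma> = secondary_cone pts (reg_subdiv pts lam)" and "lam \<in> \<sigma>"
    and face: "\<sigma> face_of \<tau>" and facet: "is_facet pts (reg_subdiv pts lam) F"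
    and maj: "affine_majorant pts lam c b" and F: "F = contact_set pts lam c b" and "a \<notin> F"
    and U: "sum U F = 1" "(\<Sum>f\<in>F. U f *\<^sub>R pts f) = pts a"
    and sigma_min: "\<And>r. strict_mono r \<Longrightarrow> min_face_bdd \<tau> \<sigma> (v \<circ> r)"
    and u_in: "\<And>i. u i \<in> \<sigma>" and decomp: "\<And>i. v i = u i + vbar i" and vbar: "vbar \<longlonglongrightarrow> vlim"
  shows "filterlim (\<lambda>i. affine_defect F U a \<bullet> v i) at_bot sequentially"
proof (rule min_face_bdd_tendsto_at_bot[OF _ _ _ face _ \<open>lam \<in> \<sigma>\<close> _ sigma_min u_in decomp vbar])
  show "polyhedron \<sigma>" unfolding \<sigma> by (rule polyhedron_secondary_cone[OF inj])
  show "t *\<^sub>R x \<in> \<sigma>" if "x \<in> \<sigma>" "0 < t" for x t using that unfolding \<sigma> by (rule secondary_cone_scaleR)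
  show "0 \<in> \<sigma>" unfolding \<sigma> by (rule zero_in_secondary_cone)
  show "affine_defect F U a \<bullet> x \<le> 0" if x: "x \<in> \<sigma>" for x
  proof -
    obtain c' b' where "affine_majorant pts x c' b'" "F \<subseteq> contact_set pts x c' b'"
      using x facet unfolding \<sigma> by (rule secondary_coneE)
    then show ?thesis by (simp add: affine_defect_contact[OF U] affine_majorant_def)
  qed
  have "affine_defect F U a \<bullet> lam = lam$a - (c \<bullet> pts a + b)"
    by (rule affine_defect_contact[OF U]) (simp add: F)
  moreover have "lam$a < c \<bullet> pts a + b"
    using maj \<open>a \<notin> F\<close> unfolding F by (simp add: affine_majorant_def contact_set_def order_less_le)
  ultimately show "affine_defect F U a \<bullet> lam < 0" by simp
qed

lemma eventually_exp_le:
  fixes g :: "'b \<Rightarrow> 'c \<Rightarrow> real"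
  assumes "finite A" "\<And>a. a \<in> A \<Longrightarrow> filterlim (g a) at_bot F" "0 < t"
  shows "eventually (\<lambda>i. \<forall>a\<in>A. exp (g a i + K a) \<le> t) F"
proof (intro eventually_ball_finite ballI)
  fix a assume "a \<in> A"
  then have "eventually (\<lambda>i. g a i \<le> ln t - K a) F" using assms(2) filterlim_at_bot by blast
  then show "eventually (\<lambda>i. exp (g a i + K a) \<le> t) F"
    by (rule eventually_mono) (use assms(3) in \<open>simp add: ln_ge_iff[symmetric]\<close>)
qed (use assms(1) in simp)

theorem mainTheorem13:
  fixes pts :: "'a::finite \<Rightarrow> real^'d::finite"
    and w :: "nat \<Rightarrow> real^'a" and v u vbar :: "nat \<Rightarrow> real^'a" and vlim :: "real^'a"
    and \<tau> \<sigma> :: "(real^'a) set" and F :: "'a set" and \<delta> \<epsilon> :: real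
  assumes inj_pts: "inj pts"
    and spans: "affine hull (range pts) = UNIV"
    and w_pos: "\<And>i a. 0 < w i $ a"
    and v_def: "\<And>i. v i = (\<chi> a. ln (w i $ a))"
    and tau_fan: "\<tau> \<in> secondary_fan pts"
    and v_in_tau: "\<And>i. v i \<in> \<tau>"
    and proper_faces: "\<And>\<phi>. cone_face \<phi> \<tau> \<Longrightarrow> \<phi> \<noteq> \<tau> \<Longrightarrow> finite {i. v i \<in> \<phi>}"
    and sigma_face: "cone_face \<sigma> \<tau>"
    and sigma_min: "\<And>r. strict_mono r \<Longrightarrow> min_face_bdd \<tau> \<sigma> (v \<circ> r)"
    and u_in: "\<And>i. u i \<in> \<sigma>"
    and decomp: "\<And>i. v i = u i + vbar i"
    and vbar_lim: "vbar \<longlonglongrightarrow> vlim"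
    and facet: "is_facet pts (cone_subdiv pts \<sigma>) F"
    and delta_pos: "0 < \<delta>" and eps_pos: "0 < \<epsilon>"
  shows "\<exists>N. \<forall>i>N. \<forall>y \<in> Bdelta F \<delta> \<inter> Xcl pts F (w i).
           (\<exists>!z. z \<in> Xo pts UNIV (w i) \<and> proj_face F z = y) \<and>
           (\<forall>z. z \<in> Xo pts UNIV (w i) \<and> proj_face F z = y \<longrightarrow> l1dist y z < \<epsilon>)"
proof -
  obtain lam c b where lam: "lam \<in> \<sigma>" "\<sigma> = secondary_cone pts (reg_subdiv pts lam)"
    and facet: "is_facet pts (reg_subdiv pts lam) F" and maj: "affine_majorant pts lam c b"
    and F: "F = contact_set pts lam c b" and spF: "affinely_spanning pts F"
    by (rule secondary_fan_facet[OF inj_pts spans tau_fan sigma_face facet])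
  obtain V where V: "\<And>x. sum (V x) F = 1" "\<And>x. (\<Sum>f\<in>F. V x f *\<^sub>R pts f) = x"
    using affinely_spanning_affine_coordinates[OF inj_pts spF] by blast
  define t where "t = \<epsilon> / (2 * real (card (-F)) + 1)"
  have t: "0 < t" "2 * real (card (-F)) * t < \<epsilon>" using eps_pos by (simp_all add: t_def field_simps)
  have "filterlim (\<lambda>i. affine_defect F (V (pts a)) a \<bullet> v i) at_bot sequentially" if "a \<in> -F" for a
    using that sigma_face unfolding cone_face_def
    by (intro affine_defect_tendsto_at_bot[OF inj_pts lam(2,1) _ facet maj F _ V(1)[of "pts a"] V(2)[of "pts a"]
          sigma_min u_in decomp vbar_lim]) auto
  then have "eventually (\<lambda>i. \<forall>a\<in>-F.
      exp (affine_defect F (V (pts a)) a \<bullet> v i + (\<Sum>f\<in>F. \<bar>V (pts a) f\<bar>) * \<bar>ln \<delta>\<bar>) \<le> t) sequentially"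
    by (rule eventually_exp_le[OF finite _ t(1)])
  then obtain N where N: "\<And>i. N \<le> i \<Longrightarrow> \<forall>a\<in>-F. exp (affine_defect F (V (pts a)) a \<bullet> (\<chi> b. ln (w i $ b))
      + (\<Sum>f\<in>F. \<bar>V (pts a) f\<bar>) * \<bar>ln \<delta>\<bar>) \<le> t"
    unfolding eventually_sequentially v_def by blast
  show ?thesis
  proof (intro exI allI impI ballI)
    fix i y assume i: "N < i" and y: "y \<in> Bdelta F \<delta> \<inter> Xcl pts F (w i)"
    note fibre = toric_fibre_unique_close[OF inj_pts spF w_pos[of i] delta_pos V N[OF less_imp_le[OF i]] y]
    show "(\<exists>!z. z \<in> Xo pts UNIV (w i) \<and> proj_face F z = y) \<and>
          (\<forall>z. z \<in> Xo pts UNIV (w i) \<and> proj_face F z = y \<longrightarrow> l1dist y z < \<epsilon>)"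
      using fibre t(2) by (blast intro: le_less_trans)
  qed
qed

end
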